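(* Let $s_0\in(0,1)$, $a\in(0,1/4)$, $\iota=\min\{1/6,s_0/4\}$, and let $D$ be a uniform $C^{1,\mathrm{dini}}$-domain with localization radius $\rho$ whose modulus $\omega$ satisfies condition (M) with this $\iota$; let $\mathfrak d$ be a regularized distance for $D$, and $f(t)=t\omega(t)$. There exist $0<\rho_1<\rho$ and $C>0$ (depending on $s_0,\omega,\rho,a$ and the constants of $D$ and $\mathfrak d$) such that for every $s\in[s_0,1)$, every $x\in D$ with $d_D(x)<\rho_1/2$ and every $\theta\in S^{d-1}$, $$\int_{a d_D(x)}^{\rho_1}\Big|\mathfrak d(x+r\theta)^s-\big(\mathfrak d(x)+\nabla\mathfrak d(x)\cdot r\theta\big)_+^s\Big|\frac{dr}{r^{1+2s}}\le C\,\frac{\omega(f^{-1}(d_D(x)))}{d_D(x)^s}\,G_s\big(\omega(f^{-1}(d_D(x)))\big),$$ where $G_s(w)=\frac{w^{2s-1}-1}{1-2s}$ for $s\ne1/2$ and $G_{1/2}(w)=\ln(1/w)$.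
   Context: Uniform $C^{1,\mathrm{dini}}$-domain: open $D$ with a continuous nondecreasing $\omega:[0,\infty)\to[0,\infty)$, $\omega(0)=0$, $\limsup_{t\to\infty}\omega(t)/t<\infty$, $\int_0^1\omega(t)/t\,dt<\infty$, a radius $\rho>0$ and $C_0>0$ such that for each $z\in\partial D$ there are a rigid motion $\Phi_z$, $\Phi_z(z)=0$, and $\phi\in C^1(\mathbb{R}^{d-1})$ with $\|\phi\|_{C^1}\le C_0$, $\phi(0)=0$, $\nabla\phi(0)=0$, $|\nabla\phi(x')-\nabla\phi(y')|\le\omega(|x'-y'|)$, $\Phi_z(D)\cap B_\rho=\{x\in B_\rho:x_d>\phi(x')\}$. Condition (M) with parameter $\iota$: $\omega$ is continuous, increasing and concave on $[0,\infty)$, $C^2$ on $(0,\infty)$, $\omega(0)=0$, satisfies $\int_0^1\omega(t)/t\,dt<\infty$, and there is $t_0>0$ such that $\omega(t)/t^\iota$ is decreasing on $(0,t_0)$ and $t^2\omega''(t)\ge-\omega(t)-3t\omega'(t)$ on $(0,t_0)$. ($f(t)=t\omega(t)$ is then strictly increasing and onto $[0,\infty)$.) $d_D(x)=\mathrm{dist}(x,\mathbb{R}^d\setminus D)$. Regularized distance for $D$: a function $\mathfrak d\in C^{0,1}(\mathbb{R}^d)\cap C^2(\mathbb{R}^d\setminus\partial D)$ with constants $C_1,C_2,C_3$ such that $C_1^{-1}d_D\le\mathfrak d\le C_1d_D$, $|\nabla\mathfrak d(x)-\nabla\mathfrak d(y)|\le C_2\omega(|x-y|)$, and $|D^2\mathfrak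 d(x)|\le C_3\,\omega(d_D(x))/d_D(x)$. $t_+=\max(t,0)$. *)

theory Defs
  imports "HOL-Analysis.Analysis"
begin

definition dD :: "'a::euclidean_space set \<Rightarrow> 'a \<Rightarrow> real" where
  "dD D x = infdist x (- D)"

definition rigid_motion :: "('a::euclidean_space \<Rightarrow> 'a) \<Rightarrow> bool" where
  "rigid_motion \<Phi> \<longleftrightarrow> (\<forall>x y. dist (\<Phi> x) (\<Phi> y) = dist x y)"

definition dini_modulus :: "(real \<Rightarrow> real) \<Rightarrow> bool" where
  "dini_modulus \<omega> \<longleftrightarrow>
     continuous_on {0..} \<omega> \<and> mono_on {0..} \<omega> \<and> \<omega> 0 = 0 \<and> (\<forall>t\<ge>0. \<omega> t \<ge> 0) \<and>
     Limsup at_top (\<lambda>t. ereal (\<omega> t / t)) < \<infinity> \<and>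
     (\<lambda>t. \<omega> t / t) integrable_on {0..1}"

text \<open>R^(d-1) is identified with the hyperplane orthogonal to a coordinate vector e (the
  x_d direction); the graph function \<phi> is defined on R^d but is required to depend
  only on the projection x' = x - (x.e) e, and g is its gradient.\<close>
definition uniform_C1dini_domain ::
  "'a::euclidean_space set \<Rightarrow> (real \<Rightarrow> real) \<Rightarrow> real \<Rightarrow> real \<Rightarrow> bool" where
  "uniform_C1dini_domain D \<omega> \<rho> C0 \<longleftrightarrow>
     open D \<and> dini_modulus \<omega> \<and> \<rho> > 0 \<and> C0 > 0 \<and>
     (\<forall>z\<in>frontier D. \<exists>\<Phi> (\<phi>::'a \<Rightarrow> real) (g::'a \<Rightarrow> 'a) e.
        e \<in> Basis \<and> rigid_motion \<Phi> \<and> \<Phi> z = 0 \<and>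
        (\<forall>x. \<phi> x = \<phi> (x - (x \<bullet> e) *\<^sub>R e)) \<and>
        (\<forall>x. (\<phi> has_derivative (\<lambda>h. g x \<bullet> h)) (at x)) \<and> continuous_on UNIV g \<and>
        (\<forall>x y. \<bar>\<phi> x\<bar> + norm (g y) \<le> C0) \<and>
        \<phi> 0 = 0 \<and> g 0 = 0 \<and>
        (\<forall>x y. x \<bullet> e = 0 \<longrightarrow> y \<bullet> e = 0 \<longrightarrow> norm (g x - g y) \<le> \<omega> (dist x y)) \<and>
        \<Phi> ` D \<inter> ball 0 \<rho> = {x \<in> ball 0 \<rho>. x \<bullet> e > \<phi> x})"

definition condM :: "real \<Rightarrow> (real \<Rightarrow> real) \<Rightarrow> bool" where
  "condM \<iota> \<omega> \<longleftrightarrow>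
     continuous_on {0..} \<omega> \<and> strict_mono_on {0..} \<omega> \<and> concave_on {0..} \<omega> \<and>
     (\<forall>t>0. \<omega> differentiable (at t) \<and> deriv \<omega> differentiable (at t)) \<and>
     continuous_on {0<..} (deriv (deriv \<omega>)) \<and>
     \<omega> 0 = 0 \<and> (\<lambda>t. \<omega> t / t) integrable_on {0..1} \<and>
     (\<exists>t0>0. antimono_on {0<..<t0} (\<lambda>t. \<omega> t / t powr \<iota>) \<and>
        (\<forall>t\<in>{0<..<t0}. t\<^sup>2 * deriv (deriv \<omega>) t \<ge> - \<omega> t - 3 * t * deriv \<omega> t))"

definition regularized_distance ::
  "'a::euclidean_space set \<Rightarrow> (real \<Rightarrow> real) \<Rightarrow> ('a \<Rightarrow> real) \<Rightarrow> ('a \<Rightarrow> 'a)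
     \<Rightarrow> real \<Rightarrow> real \<Rightarrow> real \<Rightarrow> bool" where
  "regularized_distance D \<omega> \<dd> g C1 C2 C3 \<longleftrightarrow>
     C1 > 0 \<and> C2 > 0 \<and> C3 > 0 \<and>
     (\<exists>L. \<forall>x y. \<bar>\<dd> x - \<dd> y\<bar> \<le> L * dist x y) \<and>
     (\<forall>x. dD D x / C1 \<le> \<dd> x \<and> \<dd> x \<le> C1 * dD D x) \<and>
     (\<exists>H::'a \<Rightarrow> 'a \<Rightarrow> 'a.
        (\<forall>x\<in>D. (\<dd> has_derivative (\<lambda>h. g x \<bullet> h)) (at x) \<and> (g has_derivative H x) (at x)) \<and>
        (\<forall>v. continuous_on D (\<lambda>x. H x v)) \<and>
        (\<forall>x\<in>D. onorm (H x) \<le> C3 * \<omega> (dD D x) / dD D x)) \<and>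
     (\<forall>x\<in>D. \<forall>y\<in>D. norm (g x - g y) \<le> C2 * \<omega> (dist x y))"

definition Gs :: "real \<Rightarrow> real \<Rightarrow> real" where
  "Gs s w = (if s = 1 / 2 then ln (1 / w) else (w powr (2 * s - 1) - 1) / (1 - 2 * s))"

definition posp :: "real \<Rightarrow> real" where
  "posp t = max t 0"

end

theory Submission
  imports Defs
begin

text \<open>
  Compare \<open>u(r) = \<dd>(x + r\<theta>)\<close> with its tangent line \<open>l(r) = \<dd>(x) + r \<nabla>\<dd>(x)\<cdot>\<theta>\<close>.
  Let \<open>T = f\<inverse>(d\<^sub>D(x))\<close> and \<open>w = \<omega>(T)\<close>, so that \<open>T w = d\<^sub>D(x)\<close>; the range of
  integration splits into three parts. While the ray stays in \<open>D\<close> and \<open>r \<le> T\<close>, the mean value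
  theorem and the modulus of \<open>\<nabla>\<dd>\<close> give \<open>|u - l| \<le> C\<^sub>2 w r\<close>, hence
  \<open>|u\<^sup>s - l\<^sub>+\<^sup>s| \<le> C\<^sub>2 w r |l|\<^sup>s\<^sup>-\<^sup>1\<close>; the singularity of \<open>|l|\<^sup>s\<^sup>-\<^sup>1\<close> at the zero of \<open>l\<close> is
  integrable, and integrating against \<open>r\<^sup>-\<^sup>1\<^sup>-\<^sup>2\<^sup>s\<close> yields \<open>w d\<^sup>-\<^sup>s G\<^sub>s(w)\<close>. If the ray leaves
  \<open>D\<close> at some \<open>r\<^sub>s < c T\<close>, the gradient estimate forces \<open>\<nabla>\<dd>(x)\<cdot>\<theta> \<le> -\<dd>(x) / (2 r\<^sub>s)\<close>, so
  \<open>u\<close> and \<open>l\<^sub>+\<close> both vanish shortly after \<open>r\<^sub>s\<close>. Beyond \<open>c T\<close> the crude bound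
  \<open>(3 C\<^sub>2 r \<omega>(r))\<^sup>s\<close> and the growth \<open>\<omega>(r) \<le> w (r / c T)\<^sup>\<iota>\<close>, which comes from the monotonicity
  of \<open>\<omega>(t) / t\<^sup>\<iota>\<close>, give a convergent tail.
\<close>

section \<open>Elementary inequalities for powers\<close>

lemma powr_add_le_add_powr:
  fixes x y s :: real
  assumes "0 \<le> x" "0 \<le> y" "0 < s" "s \<le> 1"
  shows "(x + y) powr s \<le> x powr s + y powr s"
proof (cases "x + y = 0")
  case True then show ?thesis using assms by simp
next
  case False
  then have xy: "x + y > 0" using assms by simp
  have key: "z / (x+y) * (x+y) powr s \<le> z powr s" if "0 \<le> z" "z \<le> x + y" for z
  proof -
    have t: "0 \<le> z / (x+y)" "z / (x+y) \<le> 1" using that xy by auto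
    have "z / (x+y) \<le> (z / (x+y)) powr s"
    proof (cases "z = 0")
      case True then show ?thesis by simp
    next
      case False
      then have "z / (x+y) > 0" using t that xy by auto
      then have "(z/(x+y)) powr 1 \<le> (z/(x+y)) powr s"
        using t assms by (intro powr_mono') auto
      then show ?thesis using \<open>z/(x+y)>0\<close> powr_one[of "z/(x+y)"] by linarith
    qed
    then have "z / (x+y) * (x+y) powr s \<le> (z / (x+y)) powr s * (x+y) powr s"
      by (intro mult_right_mono) auto
    also have "\<dots> = z powr s" using that xy by (simp add: powr_divide)
    finally show ?thesis .
  qed
  have "x / (x+y) * (x+y) powr s + y / (x+y) * (x+y) powr s = (x/(x+y) + y/(x+y)) * (x+y) powr s"
    by (simp add: distrib_right)
  also have "x/(x+y) + y/(x+y) = 1" using xy by (simp add: add_divide_distrib[symmetric])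
  finally have "(x+y) powr s = x / (x+y) * (x+y) powr s + y / (x+y) * (x+y) powr s" by simp
  also have "\<dots> \<le> x powr s + y powr s"
    using key[of x] key[of y] assms by (intro add_mono) auto
  finally show ?thesis .
qed

lemma abs_powr_diff_le_powr_abs_diff:
  fixes A B s :: real
  assumes "0 \<le> A" "0 \<le> B" "0 < s" "s \<le> 1"
  shows "\<bar>A powr s - B powr s\<bar> \<le> \<bar>A - B\<bar> powr s"
proof -
  have *: "Y powr s - X powr s \<le> (Y - X) powr s" if "0 \<le> X" "X \<le> Y" for X Y
    using powr_add_le_add_powr[of X "Y - X" s] that assms by simp
  show ?thesis
  proof (cases "B \<le> A")
    case True
    then have "B powr s \<le> A powr s" using assms by (intro powr_mono2) auto
    then show ?thesis using *[of B A] True assms by simp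
  next
    case False
    then have "A powr s \<le> B powr s" using assms by (intro powr_mono2) auto
    then show ?thesis using *[of A B] False assms by (simp add: abs_minus_commute)
  qed
qed

lemma abs_powr_diff_le_powr_bound:
  fixes A B s :: real
  assumes "0 \<le> A" "0 \<le> B" "A \<le> N" "B \<le> N" "0 < s"
  shows "\<bar>A powr s - B powr s\<bar> \<le> N powr s"
proof -
  have "A powr s \<le> N powr s" "B powr s \<le> N powr s" using assms by (auto intro: powr_mono2)
  then show ?thesis using powr_ge_zero[of A s] powr_ge_zero[of B s] by (simp only: abs_le_iff) linarith
qed

lemma powr_diff_le_linear:
  fixes A B s :: real
  assumes "0 \<le> B" "B \<le> A" "0 < A" "0 < s" "s < 1"
  shows "A powr s - B powr s \<le> (A - B) * A powr (s - 1)"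
proof -
  have "B * A powr (s - 1) \<le> B powr s"
  proof (cases "B = 0")
    case True then show ?thesis by simp
  next
    case False
    then have "B > 0" using assms by simp
    have "A powr (s - 1) \<le> B powr (s - 1)" using assms \<open>B>0\<close> by (intro powr_mono2') auto
    then have "B * A powr (s - 1) \<le> B * B powr (s - 1)" using \<open>B>0\<close> by (intro mult_left_mono) auto
    also have "\<dots> = B powr s" using \<open>B>0\<close> by (simp add: powr_diff field_simps)
    finally show ?thesis .
  qed
  moreover have "A * A powr (s - 1) = A powr s" using assms by (simp add: powr_diff field_simps)
  ultimately show ?thesis by (simp add: left_diff_distrib)
qed

lemma abs_powr_diff_le_pos:
  fixes u l E s :: real
  assumes "0 \<le> u" "0 < l" "\<bar>u - l\<bar> \<le> E" "0 < s" "s < 1"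
  shows "\<bar>u powr s - l powr s\<bar> \<le> E * l powr (s - 1)"
proof (cases "u \<le> l")
  case True
  have "l powr s - u powr s \<le> (l - u) * l powr (s - 1)"
    using powr_diff_le_linear[of u l s] True assms by auto
  moreover have "u powr s \<le> l powr s" using True assms by (intro powr_mono2) auto
  moreover have "(l - u) * l powr (s - 1) \<le> E * l powr (s - 1)"
    using assms True by (intro mult_right_mono) auto
  ultimately show ?thesis by linarith
next
  case False
  have "u powr s - l powr s \<le> (u - l) * u powr (s - 1)"
    using powr_diff_le_linear[of l u s] False assms by auto
  also have "\<dots> \<le> E * l powr (s - 1)"
    using assms False by (intro mult_mono powr_mono2') auto
  finally show ?thesis using False assms powr_mono2[of s l u] by auto
qed

lemma abs_powr_diff_posp_le:
  fixes u l E s :: real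
  assumes "0 \<le> u" "\<bar>u - l\<bar> \<le> E" "l \<noteq> 0" "0 < s" "s < 1"
  shows "\<bar>u powr s - posp l powr s\<bar> \<le> E * \<bar>l\<bar> powr (s - 1)"
proof (cases "l > 0")
  case True
  then show ?thesis using abs_powr_diff_le_pos[OF assms(1) True assms(2,4,5)] by (simp add: posp_def)
next
  case False
  then have l: "l < 0" using assms by simp
  have uE: "u \<le> E - \<bar>l\<bar>" using assms l by auto
  have "u powr s \<le> E * \<bar>l\<bar> powr (s - 1)"
  proof (cases "\<bar>l\<bar> \<le> u")
    case True
    then have "u > 0" using l by auto
    then have "u powr s = u * u powr (s - 1)" by (simp add: powr_diff field_simps)
    also have "\<dots> \<le> E * \<bar>l\<bar> powr (s - 1)"
      using True uE l assms \<open>u > 0\<close> by (intro mult_mono powr_mono2') auto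
    finally show ?thesis .
  next
    case False
    have "u powr s \<le> \<bar>l\<bar> powr s" using False assms by (intro powr_mono2) auto
    also have "\<dots> = \<bar>l\<bar> * \<bar>l\<bar> powr (s - 1)" using l by (simp add: powr_diff field_simps)
    also have "\<dots> \<le> E * \<bar>l\<bar> powr (s - 1)" using uE assms by (intro mult_right_mono) auto
    finally show ?thesis .
  qed
  then show ?thesis using l assms by (simp add: posp_def)
qed

lemma powr_one_minus:
  fixes B c :: real
  assumes "0 < B"
  shows "B powr (1 - c) = B * B powr (- c)"
proof -
  have "B powr (1 + (- c)) = B powr 1 * B powr (- c)" by (rule powr_add)
  then show ?thesis using assms by simp
qed

lemma powr_le_max_one:
  fixes X e :: real
  assumes "0 < X" "0 \<le> e" "e \<le> 1"
  shows "X powr e \<le> max 1 X"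
proof (cases "1 \<le> X")
  case True
  then have "X powr e \<le> X powr 1" using assms by (intro powr_mono) auto
  then show ?thesis using assms by simp
next
  case False
  then have "X powr e \<le> 1 powr e" using assms by (intro powr_mono2) auto
  then show ?thesis by simp
qed

lemma powr_le_max_one_squared:
  fixes X e :: real
  assumes "0 < X" "0 \<le> e" "e \<le> 2"
  shows "X powr e \<le> (max 1 X)^2"
proof -
  have M: "1 \<le> max 1 X" by simp
  have "X powr e \<le> (max 1 X) powr e" using assms by (intro powr_mono2) auto
  also have "\<dots> \<le> (max 1 X) powr 2" using M assms by (intro powr_mono) auto
  also have "\<dots> = (max 1 X)^2" using M by (simp add: powr_realpow)
  finally show ?thesis .
qed

section \<open>Integrals of powers on intervals\<close>

lemma has_integral_powr_interval:
  fixes A B c :: real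
  assumes "0 < A" "A \<le> B" "c \<noteq> -1"
  shows "((\<lambda>r. r powr c) has_integral (B powr (c+1) - A powr (c+1)) / (c+1)) {A..B}"
proof -
  have "((\<lambda>r. r powr c) has_integral (\<lambda>r. r powr (c+1) / (c+1)) B - (\<lambda>r. r powr (c+1) / (c+1)) A) {A..B}"
  proof (rule fundamental_theorem_of_calculus)
    show "A \<le> B" by fact
    fix r assume r: "r \<in> {A..B}"
    then have "r > 0" using assms by auto
    have "((\<lambda>r. r powr (c+1) / (c+1)) has_real_derivative ((c+1) * r powr (c+1-1)) / (c+1)) (at r)"
      using DERIV_cdivide[OF has_real_derivative_powr[OF \<open>r>0\<close>, of "c+1"], of "c+1"] by simp
    moreover have "((c+1) * r powr (c+1-1)) / (c+1) = r powr c" using assms by simp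
    ultimately show "((\<lambda>r. r powr (c+1) / (c+1)) has_vector_derivative r powr c) (at r within {A..B})"
      by (simp add: has_real_derivative_iff_has_vector_derivative has_vector_derivative_at_within)
  qed
  then show ?thesis by (simp add: diff_divide_distrib)
qed

lemma has_integral_abs_diff_powr:
  fixes c h s :: real
  assumes "0 < h" "0 < s"
  shows "((\<lambda>r. \<bar>r - c\<bar> powr (s - 1)) has_integral (2 * h powr s / s)) {c-h..c+h}"
proof -
  have L: "((\<lambda>r. \<bar>r - c\<bar> powr (s - 1)) has_integral ((\<lambda>r. - ((c - r) powr s / s)) c - (\<lambda>r. - ((c - r) powr s / s)) (c-h))) {c-h..c}"
  proof (rule fundamental_theorem_of_calculus_interior)
    show "c - h \<le> c" using assms by simp
    show "continuous_on {c-h..c} (\<lambda>r. - ((c - r) powr s / s))"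
      using assms by (intro continuous_intros continuous_on_powr') auto
    fix r assume "r \<in> {c-h<..<c}"
    then have r: "c - r > 0" by auto
    have "((\<lambda>r. - ((c - r) powr s / s)) has_real_derivative - (s * (c - r) powr (s - 1) * (0 - 1) / s)) (at r)"
      using r by (auto intro!: derivative_eq_intros)
    moreover have "- (s * (c - r) powr (s - 1) * (0 - 1) / s) = \<bar>r - c\<bar> powr (s - 1)"
      using r assms by (simp add: abs_minus_commute abs_of_pos)
    ultimately show "((\<lambda>r. - ((c - r) powr s / s)) has_vector_derivative \<bar>r - c\<bar> powr (s - 1)) (at r)"
      by (simp add: has_real_derivative_iff_has_vector_derivative)
  qed
  have R: "((\<lambda>r. \<bar>r - c\<bar> powr (s - 1)) has_integral ((\<lambda>r. (r - c) powr s / s) (c+h) - (\<lambda>r. (r - c) powr s / s) c)) {c..c+h}"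
  proof (rule fundamental_theorem_of_calculus_interior)
    show "c \<le> c + h" using assms by simp
    show "continuous_on {c..c+h} (\<lambda>r. (r - c) powr s / s)"
      using assms by (intro continuous_intros continuous_on_powr') auto
    fix r assume "r \<in> {c<..<c+h}"
    then have r: "r - c > 0" by auto
    have "((\<lambda>r. (r - c) powr s / s) has_real_derivative (s * (r - c) powr (s - 1) * (1 - 0) / s)) (at r)"
      using r by (auto intro!: derivative_eq_intros)
    moreover have "(s * (r - c) powr (s - 1) * (1 - 0) / s) = \<bar>r - c\<bar> powr (s - 1)"
      using r assms by simp
    ultimately show "((\<lambda>r. (r - c) powr s / s) has_vector_derivative \<bar>r - c\<bar> powr (s - 1)) (at r)"
      by (simp add: has_real_derivative_iff_has_vector_derivative)
  qed
  have "((\<lambda>r. \<bar>r - c\<bar> powr (s - 1)) has_integral (h powr s / s + h powr s / s)) {c-h..c+h}"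
    using has_integral_combine[of "c-h" c "c+h", OF _ _ L R] assms by simp
  then show ?thesis by (simp add: field_simps)
qed

lemma integral_le_has_integral:
  fixes F G :: "real \<Rightarrow> real"
  assumes cont: "continuous_on {a..b} F" and G: "(G has_integral I) {a..b}"
    and le: "\<And>r. r \<in> {a..b} \<Longrightarrow> r \<noteq> c \<Longrightarrow> F r \<le> G r"
  shows "integral {a..b} F \<le> I"
proof -
  have G': "((G(c := F c)) has_integral I) {a..b}"
    by (rule has_integral_spike_finite[OF _ _ G, of "{c}"]) auto
  have "integral {a..b} F \<le> integral {a..b} (G(c := F c))"
    by (rule integral_le[OF integrable_continuous_real[OF cont] has_integral_integrable[OF G']])
       (use le in auto)
  then show ?thesis using G' by (simp add: integral_unique)
qed

lemma integral_le_split: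
  fixes F :: "real \<Rightarrow> real"
  assumes cont: "continuous_on {0<..} F" and nn: "\<And>r. 0 < r \<Longrightarrow> 0 \<le> F r"
    and "0 < a" "0 < m"
  shows "integral {a..b} F \<le> integral {a..m} F + integral {m..b} F"
proof -
  have int: "F integrable_on {c..e}" if "0 < c" for c e
    by (rule integrable_continuous_real) (rule continuous_on_subset[OF cont], use that in auto)
  have inn: "0 \<le> integral {c..e} F" if "0 < c" for c e
    by (rule integral_nonneg[OF int[OF that]]) (use that nn in auto)
  show ?thesis
  proof (cases "m < a")
    case True
    then have "integral {a..b} F \<le> integral {m..b} F"
      by (intro integral_subset_le int) (use assms True in auto)
    moreover have "integral {a..m} F = 0" using True by simp
    ultimately show ?thesis by simp
  next
    case False
    show ?thesis
    proof (cases "b < m")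
      case True
      then have "integral {a..b} F \<le> integral {a..m} F"
        by (intro integral_subset_le int) (use assms True in auto)
      moreover have "integral {m..b} F = 0" using True by simp
      ultimately show ?thesis by simp
    next
      case False
      with \<open>\<not> m < a\<close> have "integral {a..m} F + integral {m..b} F = integral {a..b} F"
        by (intro Henstock_Kurzweil_Integration.integral_combine int) (use assms in auto)
      then show ?thesis by simp
    qed
  qed
qed

lemma integral_le_step_bound:
  fixes F :: "real \<Rightarrow> real"
  assumes cont: "continuous_on {a..b} F" and "0 \<le> h" "0 \<le> K"
    and le: "\<And>r. r \<in> {a..b} \<Longrightarrow> F r \<le> (if r \<le> a + h then K else 0)"
  shows "integral {a..b} F \<le> h * K"
proof (cases "a \<le> b")
  case False
  then show ?thesis using assms by simp
next
  case True
  define m where "m = min b (a + h)"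
  have m: "a \<le> m" "m \<le> b" "m - a \<le> h" using True assms by (auto simp: m_def)
  have "((\<lambda>r. K) has_integral (m - a) * K) ({a..m} \<inter> {a..b})"
    using has_integral_const_real[of K a m] m by (simp add: Int_absorb2)
  then have "((\<lambda>r. if r \<in> {a..m} then K else 0) has_integral (m - a) * K) {a..b}"
    by (simp only: has_integral_restrict_Int)
  then have "integral {a..b} F \<le> (m - a) * K"
    by (rule integral_le_has_integral[OF cont _, of _ _ a]) (use le m_def in fastforce)
  also have "\<dots> \<le> h * K" using m assms by (intro mult_right_mono) auto
  finally show ?thesis .
qed

lemma integral_le_powr_tail:
  fixes F :: "real \<Rightarrow> real"
  assumes cont: "continuous_on {X..R} F" and Y: "0 < Y" "Y \<le> X" and \<gamma>: "\<gamma> < -1" and K: "0 \<le> K"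
    and le: "\<And>r. r \<in> {X..R} \<Longrightarrow> F r \<le> K * r powr \<gamma>"
  shows "integral {X..R} F \<le> K * Y powr (\<gamma> + 1) / - (\<gamma> + 1)"
proof (cases "X \<le> R")
  case False
  then show ?thesis using K \<gamma> by simp
next
  case True
  have "((\<lambda>r. K * r powr \<gamma>) has_integral K * ((R powr (\<gamma>+1) - X powr (\<gamma>+1)) / (\<gamma>+1))) {X..R}"
    using Y True \<gamma> by (intro has_integral_mult_right has_integral_powr_interval) auto
  then have "integral {X..R} F \<le> K * ((R powr (\<gamma>+1) - X powr (\<gamma>+1)) / (\<gamma>+1))"
    by (rule integral_le_has_integral[OF cont, of _ _ X]) (use le in auto)
  also have "\<dots> \<le> K * (Y powr (\<gamma>+1) / - (\<gamma>+1))"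
  proof (rule mult_left_mono[OF _ K])
    have "(R powr (\<gamma>+1) - X powr (\<gamma>+1)) / (\<gamma>+1) = (X powr (\<gamma>+1) - R powr (\<gamma>+1)) / - (\<gamma>+1)"
      using \<gamma> by (simp add: field_simps)
    also have "\<dots> \<le> X powr (\<gamma>+1) / - (\<gamma>+1)" using \<gamma> by (intro divide_right_mono) auto
    also have "\<dots> \<le> Y powr (\<gamma>+1) / - (\<gamma>+1)" using \<gamma> Y by (intro divide_right_mono powr_mono2') auto
    finally show "(R powr (\<gamma>+1) - X powr (\<gamma>+1)) / (\<gamma>+1) \<le> Y powr (\<gamma>+1) / - (\<gamma>+1)" .
  qed
  finally show ?thesis by simp
qed

definition kernel_integral :: "real \<Rightarrow> real \<Rightarrow> real \<Rightarrow> real" where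
  "kernel_integral s A B = (if s = 1/2 then ln B - ln A else (B powr (1 - 2 * s) - A powr (1 - 2 * s))/(1 - 2 * s))"

lemma has_integral_kernel_integral:
  assumes "0 < A" "A \<le> B"
  shows "((\<lambda>r. r powr (- 2 * s)) has_integral kernel_integral s A B) {A..B}"
proof (cases "s = 1/2")
  case True
  have h: "((\<lambda>r. 1 / r) has_integral (ln B - ln A)) {A..B}"
  proof (rule fundamental_theorem_of_calculus)
    show "A \<le> B" by fact
    fix r assume r: "r \<in> {A..B}"
    then have "r > 0" using assms by auto
    then show "(ln has_vector_derivative 1 / r) (at r within {A..B})"
      by (auto intro!: derivative_eq_intros simp: has_real_derivative_iff_has_vector_derivative[symmetric] 
           intro: has_field_derivative_at_within)
  qed
  have eq: "r powr (- 2 * s) = 1 / r" if "r \<in> {A..B}" for r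
  proof -
    have "r > 0" using that assms by auto
    have "2 * s = 1" using True by simp
    then show ?thesis using \<open>r>0\<close> by (simp add: powr_minus_divide)
  qed
  have "((\<lambda>r. r powr (- 2 * s)) has_integral (ln B - ln A)) {A..B}"
    by (rule has_integral_spike_finite[OF finite.emptyI _ h]) (use eq in auto)
  moreover have "kernel_integral s A B = ln B - ln A" using True by (simp add: kernel_integral_def)
  ultimately show ?thesis by simp
next
  case False
  have "- 2 * s \<noteq> - 1" using False by auto
  from has_integral_powr_interval[OF assms this] show ?thesis using False
    by (simp add: kernel_integral_def)
qed

lemma kernel_integral_nonneg: "0 < A \<Longrightarrow> A \<le> B \<Longrightarrow> kernel_integral s A B \<ge> 0"
  using has_integral_nonneg[OF has_integral_kernel_integral] by auto

lemma kernel_integral_add: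
  assumes "0 < A" "A \<le> B" "B \<le> C"
  shows "kernel_integral s A B + kernel_integral s B C = kernel_integral s A C"
  using assms by (auto simp: kernel_integral_def diff_divide_distrib)

lemma kernel_integral_mono:
  assumes "0 < A" "A \<le> A'" "A' \<le> B'" "B' \<le> B"
  shows "kernel_integral s A' B' \<le> kernel_integral s A B"
  using assms kernel_integral_add[of A A' B' s] kernel_integral_add[of A B' B s]
    kernel_integral_nonneg[of A A' s] kernel_integral_nonneg[of B' B s] by auto

lemma kernel_integral_lower_bound:
  assumes "0 < A" "A \<le> B" "0 \<le> s"
  shows "(B - A) * B powr (- 2 * s) \<le> kernel_integral s A B"
proof -
  have "integral {A..B} (\<lambda>r. B powr (- 2 * s)) \<le> integral {A..B} (\<lambda>r. r powr (- 2 * s))"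
    by (rule integral_le) (use has_integral_kernel_integral[OF assms(1,2)] assms in \<open>auto intro!: powr_mono2'\<close>)
  then show ?thesis using has_integral_kernel_integral[OF assms(1,2), of s] assms by (simp add: integral_unique)
qed

lemma kernel_integral_upper_bound:
  assumes "0 < A" "A \<le> B" "0 \<le> s"
  shows "kernel_integral s A B \<le> (B - A) * A powr (- 2 * s)"
proof -
  have "integral {A..B} (\<lambda>r. r powr (- 2 * s)) \<le> integral {A..B} (\<lambda>r. A powr (- 2 * s))"
    by (rule integral_le) (use has_integral_kernel_integral[OF assms(1,2)] assms in \<open>auto intro!: powr_mono2'\<close>)
  then show ?thesis using has_integral_kernel_integral[OF assms(1,2), of s] assms by (simp add: integral_unique)
qed

lemma kernel_integral_scale:
  assumes "0 < A" "A \<le> B" "0 < c"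
  shows "kernel_integral s (c*A) (c*B) = c powr (1 - 2 * s) * kernel_integral s A B"
proof (cases "s = 1/2")
  case True
  then have "1 - 2 * s = 0" by simp
  then have c1: "c powr (1 - 2 * s) = 1" using assms by simp
  have "kernel_integral s (c*A) (c*B) = kernel_integral s A B" using assms True by (simp add: kernel_integral_def ln_mult)
  then show ?thesis by (simp add: c1)
next
  case False
  then show ?thesis using assms by (simp add: kernel_integral_def powr_mult right_diff_distrib)
qed

lemma powr_le_kernel_integral:
  fixes A B r0 s :: real
  assumes "0 < A" "2 * A \<le> B" "2 * A / 3 \<le> r0" "r0 \<le> 2 * B" "0 < s" "s < 1"
  shows "r0 powr (1 - 2 * s) \<le> 6 * kernel_integral s A B"
proof (cases "s \<le> 1/2")
  case True
  have B0: "0 < B" using assms by simp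
  have r00: "0 < r0" using assms by simp
  have "r0 powr (1 - 2 * s) \<le> (2 * B) powr (1 - 2 * s)" using True assms r00 by (intro powr_mono2) auto
  also have "\<dots> = 2 powr (1 - 2 * s) * B powr (1 - 2 * s)" using B0 by (simp add: powr_mult)
  also have "2 powr (1 - 2 * s) \<le> 2 powr 1" using True assms by (intro powr_mono) auto
  then have "2 powr (1 - 2 * s) * B powr (1 - 2 * s) \<le> 2 * B powr (1 - 2 * s)"
    by (intro mult_right_mono) auto
  also have "B powr (1 - 2 * s) = 2 * ((B - B/2) * B powr (- 2 * s))"
    using powr_one_minus[OF B0, of "2 * s"] by simp
  also have "(B - B/2) * B powr (- 2 * s) \<le> kernel_integral s (B/2) B" using B0 assms by (intro kernel_integral_lower_bound) auto
  also have "kernel_integral s (B/2) B \<le> kernel_integral s A B" using assms by (intro kernel_integral_mono) auto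
  finally have "r0 powr (1 - 2 * s) \<le> 4 * kernel_integral s A B" by simp
  moreover have "0 \<le> kernel_integral s A B" using assms by (intro kernel_integral_nonneg) auto
  ultimately show ?thesis by simp
next
  case False
  have r00: "0 < r0" using assms by simp
  have "r0 powr (1 - 2 * s) \<le> (2 * A / 3) powr (1 - 2 * s)" using False assms by (intro powr_mono2') auto
  also have "\<dots> = (2/3) powr (1 - 2 * s) * A powr (1 - 2 * s)" using assms by (simp add: powr_mult powr_divide)
  also have "(2/3::real) powr (1 - 2 * s) \<le> (2/3) powr (-1)" using False assms by (intro powr_mono') auto
  then have "(2/3) powr (1 - 2 * s) * A powr (1 - 2 * s) \<le> (3/2) * A powr (1 - 2 * s)"
    by (intro mult_right_mono) (auto simp: powr_minus_divide)
  also have "A powr (1 - 2 * s) = 2 powr (2 * s) * ((2 * A - A) * (2 * A) powr (- 2 * s))"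
  proof -
    have "(2 * A) powr (- 2 * s) = 2 powr (- 2 * s) * A powr (- 2 * s)" using assms by (simp add: powr_mult)
    moreover have "2 powr (2 * s) * 2 powr (- 2 * s) = (1::real)" by (simp add: powr_add[symmetric])
    moreover have "A powr (1 - 2 * s) = A * A powr (- 2 * s)" using powr_one_minus[OF assms(1), of "2 * s"] by simp
    ultimately show ?thesis by (simp add: algebra_simps)
  qed
  also have "2 powr (2 * s) \<le> (2::real) powr 2" using assms by (intro powr_mono) auto
  then have "2 powr (2 * s) * ((2 * A - A) * (2 * A) powr (- 2 * s)) \<le> 4 * ((2 * A - A) * (2 * A) powr (- 2 * s))"
    using assms by (intro mult_right_mono) auto
  also have "(2 * A - A) * (2 * A) powr (- 2 * s) \<le> kernel_integral s A (2 * A)" using assms by (intro kernel_integral_lower_bound) auto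
  also have "kernel_integral s A (2 * A) \<le> kernel_integral s A B" using assms by (intro kernel_integral_mono) auto
  finally show ?thesis using assms by simp
qed

lemma Gs_eq_kernel_integral:
  assumes "0 < w"
  shows "Gs s w = kernel_integral s 1 (1/w)"
  using assms by (auto simp: Gs_def kernel_integral_def powr_divide powr_minus_divide[symmetric] )

lemma Gs_lower_bounds:
  fixes s w :: real
  assumes "0 < s" "s < 1" "0 < w" "w \<le> 1/4"
  shows "1/4 \<le> Gs s w" "w powr (2 * s) \<le> 2 * w * Gs s w"
proof -
  have G: "Gs s w = kernel_integral s 1 (1/w)" using assms by (simp add: Gs_eq_kernel_integral)
  have w2: "2 \<le> 1/w" using assms by (simp add: field_simps)
  have "(2 - 1) * 2 powr (- 2 * s) \<le> kernel_integral s 1 2" by (rule kernel_integral_lower_bound) (use assms in auto)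
  moreover have "kernel_integral s 1 2 \<le> kernel_integral s 1 (1/w)" by (rule kernel_integral_mono) (use w2 in auto)
  moreover have "(1/4::real) \<le> 2 powr (- 2 * s)"
  proof -
    have "(2::real) powr (- 2) \<le> 2 powr (- 2 * s)" using assms by (intro powr_mono) auto
    moreover have "(2::real) powr (- 2) = 1/4" by (simp add: powr_minus_divide)
    ultimately show ?thesis by simp
  qed
  ultimately show "1/4 \<le> Gs s w" using G by simp
  have h: "1 \<le> 1 / (2 * w)" using assms by (simp add: field_simps)
  have "(1/w - 1/(2*w)) * (1/w) powr (- 2 * s) \<le> kernel_integral s (1/(2*w)) (1/w)"
  proof (rule kernel_integral_lower_bound)
    show "1 / (2 * w) \<le> 1 / w" using assms by (simp add: frac_le)
  qed (use assms in auto)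
  moreover have "kernel_integral s (1/(2*w)) (1/w) \<le> kernel_integral s 1 (1/w)"
    by (rule kernel_integral_mono) (use assms h in \<open>auto simp: field_simps\<close>)
  moreover have "(1/w - 1/(2*w)) * (1/w) powr (- 2 * s) = w powr (2 * s) / (2 * w)"
    using assms by (simp add: powr_divide powr_minus_divide field_simps)
  ultimately have "w powr (2 * s) / (2 * w) \<le> Gs s w" using G by linarith
  then show "w powr (2 * s) \<le> 2 * w * Gs s w" using assms by (simp add: field_simps)
qed

lemma kernel_integral_le_Gs:
  fixes s a d w T :: real
  assumes "0 < s" "s < 1" "0 < a" "a < 1/4" "0 < d" "0 < w" "w \<le> 1/4" "T * w = d"
  shows "kernel_integral s (a * d) T \<le> d powr (1 - 2 * s) * ((4 / a^2 + 1) * Gs s w)"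
proof -
  have T: "T = d * (1/w)" using assms by (simp add: field_simps)
  have w1: "1 \<le> 1/w" using assms by (simp add: field_simps)
  have "kernel_integral s (a * d) T = kernel_integral s (d * a) (d * (1/w))" by (simp add: T mult.commute)
  also have "\<dots> = d powr (1 - 2 * s) * kernel_integral s a (1/w)"
    by (rule kernel_integral_scale) (use assms w1 in linarith)+
  also have "kernel_integral s a (1/w) = kernel_integral s a 1 + kernel_integral s 1 (1/w)" by (rule kernel_integral_add[symmetric]) (use assms w1 in auto)
  also have "kernel_integral s a 1 \<le> (1 - a) * a powr (- 2 * s)" by (rule kernel_integral_upper_bound) (use assms in auto)
  also have "(1 - a) * a powr (- 2 * s) \<le> 1 * a powr (- 2)"
    using assms by (intro mult_mono powr_mono') auto
  also have "a powr (- 2) = 1 / a^2" using assms by (simp add: powr_minus_divide powr_realpow)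
  also have "kernel_integral s 1 (1/w) = Gs s w" using assms by (simp add: Gs_eq_kernel_integral)
  also have "1 * (1 / a^2) + Gs s w \<le> (4 / a^2 + 1) * Gs s w"
  proof -
    have "1/4 \<le> Gs s w" using Gs_lower_bounds assms by auto
    then have "1 / a^2 \<le> (4 / a^2) * Gs s w" using assms by (simp add: field_simps)
    then show ?thesis by (simp add: algebra_simps)
  qed
  finally show ?thesis using assms by (simp add: mult_left_mono)
qed

text \<open>When \<open>p < 0\<close>, the affine function \<open>d + p r\<close> vanishes at \<open>r\<^sub>0 = d / |p|\<close>. Near \<open>r\<^sub>0\<close> the
  kernel is frozen at \<open>(r\<^sub>0/2)\<^sup>-\<^sup>2\<^sup>s\<close> and the singularity \<open>|r - r\<^sub>0|\<^sup>s\<^sup>-\<^sup>1\<close> is integrated exactly;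
  away from \<open>r\<^sub>0\<close> one has \<open>|d + p r| \<ge> d / 2\<close>.\<close>

lemma bump_mass_le:
  fixes r0 q s d :: real
  assumes "0 < r0" "0 < q" "q * r0 = d" "0 < s" "s < 1" "0 < d"
  shows "(r0/2) powr (- 2 * s) * q powr (s - 1) * (2 * (r0/2) powr s / s) \<le> 4 * r0 powr (1 - 2 * s) * d powr (s - 1) / s"
proof -
  have e1: "(r0/2) powr (- 2 * s) * (r0/2) powr s = (r0/2) powr (- s)"
    by (simp add: powr_add[symmetric])
  have e2: "(r0/2) powr (- s) = r0 powr (- s) * 2 powr s"
    using assms by (simp add: powr_divide powr_minus_divide)
  have qd: "q = d / r0" using assms by (simp add: field_simps)
  have e3: "q powr (s - 1) = d powr (s - 1) * r0 powr (1 - s)"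
  proof -
    have "q powr (s - 1) = d powr (s - 1) / r0 powr (s - 1)" using qd assms by (simp add: powr_divide)
    moreover have "r0 powr (1 - s) = 1 / r0 powr (s - 1)" using assms
      by (metis minus_diff_eq powr_minus_divide)
    ultimately show ?thesis by simp
  qed
  have e4: "r0 powr (- s) * r0 powr (1 - s) = r0 powr (1 - 2 * s)" by (simp add: powr_add[symmetric])
  have "(r0/2) powr (- 2 * s) * q powr (s - 1) * (2 * (r0/2) powr s / s)
      = 2 * ((r0/2) powr (- 2 * s) * (r0/2) powr s) * q powr (s - 1) / s" by (simp add: field_simps)
  also have "\<dots> = 2 * 2 powr s * (r0 powr (- s) * r0 powr (1 - s)) * d powr (s - 1) / s"
    by (simp only: e1 e2 e3) (simp add: field_simps)
  also have "\<dots> = 2 * 2 powr s * r0 powr (1 - 2 * s) * d powr (s - 1) / s" by (simp only: e4)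
  also have "\<dots> \<le> 2 * 2 * r0 powr (1 - 2 * s) * d powr (s - 1) / s"
  proof -
    have "2 powr s \<le> (2::real) powr 1" using assms by (intro powr_mono) auto
    then have "2 powr s \<le> (2::real)" by simp
    then show ?thesis using assms
      by (intro divide_right_mono mult_right_mono) auto
  qed
  finally show ?thesis by simp
qed

lemma singular_bump_integral_le:
  fixes q r0 d s A B m :: real
  defines "bump \<equiv> \<lambda>r. if r \<in> {r0/2..3/2 * r0}
                         then (r0/2) powr (- 2 * s) * q powr (s - 1) * \<bar>r - r0\<bar> powr (s - 1) else 0"
  assumes q: "0 < q" "q * r0 = d" "0 < d" and s: "0 < s" "s < 1"
    and A: "0 < A" "2 * A \<le> B" "A \<le> m" "m \<le> B"
  shows "bump integrable_on {A..m}" "integral {A..m} bump \<le> 24 * d powr (s - 1) * kernel_integral s A B / s"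
proof -
  have r0: "0 < r0" using q by (metis zero_less_mult_pos)
  define h where "h = r0 / 2"
  have h0: "0 < h" using r0 by (simp add: h_def)
  have bump_eq: "bump = (\<lambda>r. if r \<in> {r0-h..r0+h} then (r0/2) powr (- 2 * s) * q powr (s - 1) * \<bar>r - r0\<bar> powr (s - 1) else 0)"
    by (simp add: bump_def h_def fun_eq_iff)
  define f where "f r = (r0/2) powr (- 2 * s) * q powr (s - 1) * \<bar>r - r0\<bar> powr (s - 1)" for r
  have f_full: "(f has_integral (r0/2) powr (- 2 * s) * q powr (s - 1) * (2 * h powr s / s)) {r0-h..r0+h}"
    unfolding f_def by (rule has_integral_mult_right[OF has_integral_abs_diff_powr[OF h0 s(1)]])
  define J where "J = {max (r0-h) A..min (r0+h) m}"
  have f_J: "f integrable_on J" unfolding J_def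
    by (rule integrable_on_subinterval[OF has_integral_integrable[OF f_full]]) auto
  have "(f has_integral integral J f) ({r0-h..r0+h} \<inter> {A..m})"
    using f_J by (simp add: J_def Int_atLeastAtMost integrable_integral)
  then have "((\<lambda>r. if r \<in> {r0-h..r0+h} then f r else 0) has_integral integral J f) {A..m}"
    by (simp only: has_integral_restrict_Int)
  then have bump_int: "(bump has_integral integral J f) {A..m}"
    unfolding bump_eq f_def by simp
  then show "bump integrable_on {A..m}" by blast
  have "integral J f \<le> 24 * d powr (s - 1) * kernel_integral s A B / s"
  proof (cases "J = {}")
    case True
    then show ?thesis using A s kernel_integral_nonneg[of A B s] by simp
  next
    case False
    then have near: "r0 - h \<le> m" "A \<le> r0 + h" by (auto simp: J_def)
    have "integral J f \<le> integral {r0-h..r0+h} f"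
      using r0 by (intro integral_subset_le f_J has_integral_integrable[OF f_full]) (auto simp: J_def f_def)
    also have "\<dots> = (r0/2) powr (- 2 * s) * q powr (s - 1) * (2 * (r0/2) powr s / s)"
      using f_full by (simp add: integral_unique h_def)
    also have "\<dots> \<le> 4 * r0 powr (1 - 2 * s) * d powr (s - 1) / s"
      by (rule bump_mass_le[OF r0 q(1,2) s q(3)])
    also have "\<dots> \<le> 4 * (6 * kernel_integral s A B) * d powr (s - 1) / s"
    proof -
      have "r0 powr (1 - 2 * s) \<le> 6 * kernel_integral s A B"
        by (rule powr_le_kernel_integral) (use A near s in \<open>auto simp: h_def\<close>)
      then show ?thesis using s by (intro divide_right_mono mult_right_mono mult_left_mono) auto
    qed
    finally show ?thesis by (simp add: mult_ac)
  qed
  then show "integral {A..m} bump \<le> 24 * d powr (s - 1) * kernel_integral s A B / s"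
    using bump_int by (simp add: integral_unique)
qed

lemma integral_le_kernel_affine_powr_increasing:
  fixes F :: "real \<Rightarrow> real"
  assumes p: "0 \<le> p" and s: "0 < s" "s < 1" and A: "0 < A" "A \<le> m" and d: "0 < d" and K: "0 \<le> K"
    and cont: "continuous_on {A..m} F"
    and le: "\<And>r. r \<in> {A..m} \<Longrightarrow> d + p * r \<noteq> 0 \<Longrightarrow> F r \<le> K * (r powr (- 2 * s) * \<bar>d + p * r\<bar> powr (s - 1))"
  shows "integral {A..m} F \<le> K * d powr (s - 1) * kernel_integral s A m"
proof (rule integral_le_has_integral[OF cont _, of _ _ 0])
  show "((\<lambda>r. K * d powr (s - 1) * r powr (- 2 * s)) has_integral K * d powr (s - 1) * kernel_integral s A m) {A..m}"
    by (intro has_integral_mult_right has_integral_kernel_integral A)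
  fix r assume r: "r \<in> {A..m}"
  have dr: "d \<le> d + p * r" using p r A by simp
  then have "\<bar>d + p * r\<bar> powr (s - 1) \<le> d powr (s - 1)" using d s by (intro powr_mono2') auto
  then have "K * (r powr (- 2 * s) * \<bar>d + p * r\<bar> powr (s - 1)) \<le> K * (r powr (- 2 * s) * d powr (s - 1))"
    using K by (intro mult_left_mono) auto
  then show "F r \<le> K * d powr (s - 1) * r powr (- 2 * s)" using le[OF r] dr d by (simp add: mult_ac)
qed

lemma affine_powr_le_split:
  fixes q r0 d s r :: real
  assumes q: "0 < q" "q * r0 = d" "0 < d" and s: "0 < s" "s < 1" and r: "0 < r"
  shows "r powr (- 2 * s) * (q * \<bar>r - r0\<bar>) powr (s - 1) \<le> 2 * d powr (s - 1) * r powr (- 2 * s)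
     + (if r \<in> {r0/2..3/2 * r0} then (r0/2) powr (- 2 * s) * q powr (s - 1) * \<bar>r - r0\<bar> powr (s - 1) else 0)"
proof -
  have r0: "0 < r0" using q by (metis zero_less_mult_pos)
  show ?thesis
  proof (cases "r \<in> {r0/2..3/2 * r0}")
    case True
    then have "r powr (- 2 * s) \<le> (r0/2) powr (- 2 * s)" using r0 s by (intro powr_mono2') auto
    then have "r powr (- 2 * s) * (q * \<bar>r - r0\<bar>) powr (s - 1)
        \<le> (r0/2) powr (- 2 * s) * q powr (s - 1) * \<bar>r - r0\<bar> powr (s - 1)"
      using q by (simp add: powr_mult mult_right_mono mult.assoc)
    moreover have "0 \<le> 2 * d powr (s - 1) * r powr (- 2 * s)" by simp
    ultimately have "r powr (- 2 * s) * (q * \<bar>r - r0\<bar>) powr (s - 1) \<le> 2 * d powr (s - 1) * r powr (- 2 * s)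
        + (r0/2) powr (- 2 * s) * q powr (s - 1) * \<bar>r - r0\<bar> powr (s - 1)" by linarith
    then show ?thesis using True by simp
  next
    case False
    then have "r0 / 2 \<le> \<bar>r - r0\<bar>" by (auto simp: abs_if)
    then have "d / 2 \<le> q * \<bar>r - r0\<bar>" using q mult_left_mono[of "r0 / 2" "\<bar>r - r0\<bar>" q] by simp
    then have "(q * \<bar>r - r0\<bar>) powr (s - 1) \<le> (d / 2) powr (s - 1)" using q s by (intro powr_mono2') auto
    also have "\<dots> = d powr (s - 1) * 2 powr (1 - s)" using q by (simp add: powr_divide powr_diff)
    also have "\<dots> \<le> d powr (s - 1) * 2"
      using powr_mono[of "1 - s" 1 "2::real"] s by (intro mult_left_mono) auto
    finally have "r powr (- 2 * s) * (q * \<bar>r - r0\<bar>) powr (s - 1) \<le> r powr (- 2 * s) * (2 * d powr (s - 1))"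
      by (intro mult_left_mono) auto
    then show ?thesis using False by (auto simp: mult_ac)
  qed
qed

lemma integral_le_kernel_affine_powr_decreasing:
  fixes F :: "real \<Rightarrow> real"
  assumes p: "p < 0" and s: "0 < s" "s < 1" and A: "0 < A" "2 * A \<le> B" "A \<le> m" "m \<le> B"
    and d: "0 < d" and K: "0 \<le> K" and cont: "continuous_on {A..m} F"
    and le: "\<And>r. r \<in> {A..m} \<Longrightarrow> d + p * r \<noteq> 0 \<Longrightarrow> F r \<le> K * (r powr (- 2 * s) * \<bar>d + p * r\<bar> powr (s - 1))"
  shows "integral {A..m} F \<le> K * d powr (s - 1) * (2 + 24 / s) * kernel_integral s A B"
proof -
  define q where "q = - p"
  define r0 where "r0 = d / q"
  have q0: "0 < q" and qr0: "q * r0 = d" using p d by (auto simp: q_def r0_def)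
  define bump where "bump r = (if r \<in> {r0/2..3/2 * r0}
      then (r0/2) powr (- 2 * s) * q powr (s - 1) * \<bar>r - r0\<bar> powr (s - 1) else 0)" for r
  have bump_int: "bump integrable_on {A..m}"
    and bump_le: "integral {A..m} bump \<le> 24 * d powr (s - 1) * kernel_integral s A B / s"
    unfolding bump_def by (rule singular_bump_integral_le[OF q0 qr0 d s A])+
  have aff: "\<bar>d + p * r\<bar> = q * \<bar>r - r0\<bar>" for r
  proof -
    have "d + p * r = q * (r0 - r)" using qr0 by (simp add: q_def algebra_simps)
    then show ?thesis using q0 by (simp add: abs_mult abs_minus_commute)
  qed
  have "integral {A..m} F \<le> K * (2 * d powr (s - 1)) * kernel_integral s A m + K * integral {A..m} bump"
  proof (rule integral_le_has_integral[OF cont _, of _ _ r0])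
    show "((\<lambda>r. K * (2 * d powr (s - 1)) * r powr (- 2 * s) + K * bump r) has_integral
        K * (2 * d powr (s - 1)) * kernel_integral s A m + K * integral {A..m} bump) {A..m}"
      using bump_int A by (intro has_integral_add has_integral_mult_right has_integral_kernel_integral) auto
    fix r assume r: "r \<in> {A..m}" "r \<noteq> r0"
    then have "d + p * r \<noteq> 0" using aff[of r] q0 by auto
    then have "F r \<le> K * (r powr (- 2 * s) * \<bar>d + p * r\<bar> powr (s - 1))" using le r by blast
    also have "\<dots> \<le> K * (2 * d powr (s - 1) * r powr (- 2 * s) + bump r)"
      using affine_powr_le_split[OF q0 qr0 d s, of r] r A K
      by (intro mult_left_mono) (auto simp: aff bump_def)
    finally show "F r \<le> K * (2 * d powr (s - 1)) * r powr (- 2 * s) + K * bump r"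
      by (simp add: algebra_simps)
  qed
  also have "\<dots> \<le> K * (2 * d powr (s - 1)) * kernel_integral s A B + K * (24 * d powr (s - 1) * kernel_integral s A B / s)"
    using K A kernel_integral_mono[of A A m B s] bump_le by (intro add_mono mult_left_mono) auto
  also have "\<dots> = K * d powr (s - 1) * (2 + 24 / s) * kernel_integral s A B"
    by (simp add: field_simps)
  finally show ?thesis .
qed

lemma integral_le_kernel_affine_powr:
  fixes F :: "real \<Rightarrow> real"
  assumes s: "0 < s" "s < 1" and A: "0 < A" "2 * A \<le> B" "m \<le> B"
    and d: "0 < d" and K: "0 \<le> K" and cont: "continuous_on {A..m} F"
    and le: "\<And>r. r \<in> {A..m} \<Longrightarrow> d + p * r \<noteq> 0 \<Longrightarrow> F r \<le> K * (r powr (- 2 * s) * \<bar>d + p * r\<bar> powr (s - 1))"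
  shows "integral {A..m} F \<le> K * d powr (s - 1) * (26 / s) * kernel_integral s A B"
proof (cases "A \<le> m")
  case False
  then show ?thesis using s A K kernel_integral_nonneg[of A B s] by simp
next
  case True
  have QB: "0 \<le> kernel_integral s A B" using A by (intro kernel_integral_nonneg) auto
  have KQ: "0 \<le> K * d powr (s - 1) * kernel_integral s A B" using K QB by simp
  show ?thesis
  proof (cases "0 \<le> p")
    case p: True
    have "integral {A..m} F \<le> K * d powr (s - 1) * kernel_integral s A m"
      by (rule integral_le_kernel_affine_powr_increasing[OF p s A(1) True d K cont le])
    also have "\<dots> \<le> K * d powr (s - 1) * kernel_integral s A B"
      using K A True by (intro mult_left_mono kernel_integral_mono) auto
    also have "\<dots> \<le> K * d powr (s - 1) * (26 / s) * kernel_integral s A B"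
      using KQ s mult_left_mono[of 1 "26 / s" "K * d powr (s - 1) * kernel_integral s A B"]
      by (simp add: mult_ac)
    finally show ?thesis .
  next
    case False
    then have "integral {A..m} F \<le> K * d powr (s - 1) * (2 + 24 / s) * kernel_integral s A B"
      using s A True d K cont le by (intro integral_le_kernel_affine_powr_decreasing) auto
    also have "\<dots> \<le> K * d powr (s - 1) * (26 / s) * kernel_integral s A B"
      using K QB s by (intro mult_right_mono mult_left_mono) (auto simp: field_simps)
    finally show ?thesis .
  qed
qed

section \<open>Arithmetic of the three bounds\<close>

lemma exit_bump_le:
  fixes rs T E K d0 s :: real
  assumes rs: "0 < rs" "rs \<le> T" and E: "0 \<le> E" "E \<le> K * rs" and d0: "0 < d0" and s: "0 < s" "s < 1"
  shows "2 * rs * E / d0 * (E powr s / rs powr (1 + 2 * s)) \<le> 2 * K powr (1 + s) * T powr (1 - s) / d0"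
proof -
  have K: "0 \<le> K" using E rs by (smt (verit) mult_nonneg_nonneg zero_le_mult_iff)
  have e1: "E * E powr s = E powr (1 + s)" using E by (cases "E = 0") (simp_all add: powr_add)
  have e2: "rs * rs powr (- (1 + 2 * s)) = rs powr (- 2 * s)" using rs powr_add[of rs 1 "- (1 + 2 * s)"] by simp
  have e3: "(K * rs) powr (1 + s) * rs powr (- 2 * s) = K powr (1 + s) * rs powr (1 - s)"
    using K rs by (simp add: powr_mult mult.assoc powr_add[symmetric])
  have "2 * rs * E / d0 * (E powr s / rs powr (1 + 2 * s)) = 2 * (E * E powr s) * (rs * rs powr (- (1 + 2 * s))) / d0"
    by (simp only: powr_minus_divide) (simp add: field_simps)
  also have "\<dots> = 2 * E powr (1 + s) * rs powr (- 2 * s) / d0" by (simp only: e1 e2)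
  also have "\<dots> \<le> 2 * (K * rs) powr (1 + s) * rs powr (- 2 * s) / d0"
    using E s d0 by (intro divide_right_mono mult_right_mono mult_left_mono powr_mono2) auto
  also have "\<dots> = 2 * (K powr (1 + s) * rs powr (1 - s)) / d0" by (simp only: mult.assoc e3)
  also have "\<dots> \<le> 2 * (K powr (1 + s) * T powr (1 - s)) / d0"
    using rs s d0 by (intro divide_right_mono mult_left_mono powr_mono2) auto
  finally show ?thesis by (simp only: mult.assoc)
qed

lemma near_term_le:
  fixes s s0 a d w T d0 C1 C2 :: real
  assumes s: "0 < s0" "s0 \<le> s" "s < 1" and a: "0 < a" "a < 1/4" and d: "0 < d"
    and w: "0 < w" "w \<le> 1/4" and Tw: "T * w = d" and C: "0 < C1" "0 < C2" and d0: "d / C1 \<le> d0"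
  shows "C2 * w * d0 powr (s - 1) * (26 / s) * kernel_integral s (a * d) T
    \<le> C2 * max 1 C1 * (26 / s0) * (4 / a^2 + 1) * (w * d powr (- s) * Gs s w)"
proof -
  have dC: "0 < d / C1" using d C by simp
  have "d0 powr (s - 1) \<le> (d / C1) powr (s - 1)" using dC d0 s by (intro powr_mono2') auto
  also have "\<dots> = d powr (s - 1) * C1 powr (1 - s)"
    using d C by (simp add: powr_divide powr_diff)
  also have "\<dots> \<le> d powr (s - 1) * max 1 C1" using C s by (intro mult_left_mono powr_le_max_one) auto
  finally have d0_le: "d0 powr (s - 1) \<le> d powr (s - 1) * max 1 C1" .
  have T0: "0 < T" using Tw d w by (metis zero_less_mult_pos2)
  have "a * d = (a * w) * T" using Tw by (simp add: mult_ac)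
  also have "\<dots> \<le> 1 * T" using T0 a w by (intro mult_right_mono mult_le_one) auto
  finally have Qn: "0 \<le> kernel_integral s (a * d) T" using a d by (intro kernel_integral_nonneg) auto
  have "26 / s \<le> 26 / s0" using s by (simp add: frac_le)
  then have "C2 * w * d0 powr (s - 1) * (26 / s) * kernel_integral s (a * d) T
      \<le> C2 * w * (d powr (s - 1) * max 1 C1) * (26 / s0) * (d powr (1 - 2 * s) * ((4 / a^2 + 1) * Gs s w))"
    using C w s Qn d0_le kernel_integral_le_Gs[OF _ s(3) a d w Tw] by (intro mult_mono) auto
  also have "\<dots> = C2 * max 1 C1 * (26 / s0) * (4 / a^2 + 1) * (w * (d powr (s - 1) * d powr (1 - 2 * s)) * Gs s w)"
    by (simp add: mult_ac)
  also have "d powr (s - 1) * d powr (1 - 2 * s) = d powr (- s)" by (simp add: powr_add[symmetric])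
  finally show ?thesis .
qed

lemma exit_term_le:
  fixes s d w T d0 C1 C2 :: real
  assumes s: "0 < s" "s < 1" and d: "0 < d" and w: "0 < w" and Tw: "T * w = d"
    and C: "0 < C1" "0 < C2" and d0: "d / C1 \<le> d0"
  shows "2 * (C2 * w) powr (1 + s) * T powr (1 - s) / d0 \<le> 2 * C1 * (max 1 C2)^2 * (w powr (2 * s) * d powr (- s))"
proof -
  have d0_pos: "0 < d0" using d C d0 by (smt (verit) divide_pos_pos)
  have T: "T = d / w" using Tw w by (simp add: field_simps)
  have e1: "(C2 * w) powr (1 + s) = C2 powr (1 + s) * w powr (1 + s)" using C w by (simp add: powr_mult)
  have e2: "T powr (1 - s) = d powr (1 - s) * w powr (s - 1)"
    using d w by (simp add: T powr_divide powr_diff)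
  have e3: "w powr (1 + s) * w powr (s - 1) = w powr (2 * s)" by (simp add: powr_add[symmetric])
  have e4: "d powr (1 - s) / d = d powr (- s)" using d by (simp add: powr_diff powr_minus_divide)
  have i1: "1 / d0 \<le> C1 / d" using d0 d0_pos d C by (simp add: field_simps)
  have i2: "C2 powr (1 + s) \<le> (max 1 C2)^2" using C s by (intro powr_le_max_one_squared) auto
  have "2 * (C2 * w) powr (1 + s) * T powr (1 - s) / d0
      = 2 * C2 powr (1 + s) * (w powr (1 + s) * w powr (s - 1)) * d powr (1 - s) * (1 / d0)"
    by (simp add: e1 e2 mult_ac)
  also have "\<dots> \<le> 2 * (max 1 C2)^2 * (w powr (1 + s) * w powr (s - 1)) * d powr (1 - s) * (C1 / d)"
    using i1 i2 d0_pos by (intro mult_mono mult_right_mono) auto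
  also have "\<dots> = 2 * C1 * (max 1 C2)^2 * (w powr (2 * s) * (d powr (1 - s) / d))"
    by (subst e3) (simp add: field_simps)
  finally show ?thesis by (simp add: e4)
qed

lemma far_term_le:
  fixes s s0 d w T c \<iota> C2 :: real
  assumes s: "0 < s0" "s0 \<le> s" "s < 1" and d: "0 < d" and w: "0 < w" and Tw: "T * w = d"
    and C: "0 < C2" and c: "0 < c" "c \<le> 1" and io: "0 < \<iota>" "\<iota> \<le> 1/2"
  shows "(3 * C2) powr s * w powr s * (c * T) powr (- s) / (s * (1 - \<iota>))
    \<le> max 1 (3 * C2) * (1 / c) * (2 / s0) * (w powr (2 * s) * d powr (- s))"
proof -
  have T: "T = d / w" using Tw w by (simp add: field_simps)
  have e1: "(c * T) powr (- s) = c powr (- s) * d powr (- s) * w powr s"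
    using c d w by (simp add: T powr_mult powr_divide powr_minus_divide)
  have e2: "w powr s * w powr s = w powr (2 * s)" by (simp add: powr_add[symmetric])
  have i1: "(3 * C2) powr s \<le> max 1 (3 * C2)" using C s by (intro powr_le_max_one) auto
  have "c powr 1 \<le> c powr s" using c s by (intro powr_mono') auto
  then have i2: "c powr (- s) \<le> 1 / c" using c by (simp add: powr_minus_divide divide_left_mono)
  have "s0 / 2 \<le> s * (1 - \<iota>)" using s io mult_left_mono[of "1/2" "1 - \<iota>" s] by linarith
  then have i3: "1 / (s * (1 - \<iota>)) \<le> 2 / s0" using s io by (simp add: frac_le field_simps)
  have "(3 * C2) powr s * w powr s * (c * T) powr (- s) / (s * (1 - \<iota>))
      = (3 * C2) powr s * c powr (- s) * (1 / (s * (1 - \<iota>))) * ((w powr s * w powr s) * d powr (- s))"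
    by (subst e1) (simp add: mult_ac)
  also have "\<dots> \<le> max 1 (3 * C2) * (1 / c) * (2 / s0) * ((w powr s * w powr s) * d powr (- s))"
    using i1 i2 i3 s io c by (intro mult_mono mult_right_mono) auto
  finally show ?thesis by (simp add: e2)
qed

definition estimate_constant :: "real \<Rightarrow> real \<Rightarrow> real \<Rightarrow> real \<Rightarrow> real \<Rightarrow> real" where
  "estimate_constant s0 a c C1 C2 =
     C2 * max 1 C1 * (26 / s0) * (4 / a^2 + 1) + 2 * (2 * C1 * (max 1 C2)^2 + max 1 (3 * C2) * (1 / c) * (2 / s0))"

lemma estimate_constant_pos:
  "0 < s0 \<Longrightarrow> 0 < a \<Longrightarrow> 0 < c \<Longrightarrow> 0 < C1 \<Longrightarrow> 0 < C2 \<Longrightarrow> 0 < estimate_constant s0 a c C1 C2"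
  unfolding estimate_constant_def by (intro add_pos_nonneg mult_pos_pos) (auto simp: add_pos_pos)

text \<open>All three region bounds are multiples of \<open>w d\<^sup>-\<^sup>s G\<^sub>s(w)\<close>, the last two because
  \<open>w\<^sup>2\<^sup>s \<le> 2 w G\<^sub>s(w)\<close>.\<close>

lemma three_terms_le:
  fixes s s0 a d w T d0 c \<iota> C1 C2 :: real
  assumes s: "0 < s0" "s0 \<le> s" "s < 1" and a: "0 < a" "a < 1/4" and d: "0 < d"
    and w: "0 < w" "w \<le> 1/4" and Tw: "T * w = d" and C: "0 < C1" "0 < C2" and d0: "d / C1 \<le> d0"
    and c: "0 < c" "c \<le> 1" and io: "0 < \<iota>" "\<iota> \<le> 1/6"
  shows "C2 * w * d0 powr (s - 1) * (26 / s) * kernel_integral s (a * d) T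
     + 2 * (C2 * w) powr (1 + s) * T powr (1 - s) / d0
     + (3 * C2) powr s * w powr s * (c * T) powr (- s) / (s * (1 - \<iota>))
   \<le> estimate_constant s0 a c C1 C2 * (w / d powr s) * Gs s w"
proof -
  have s_pos: "0 < s" using s by simp
  have W: "w powr (2 * s) * d powr (- s) \<le> 2 * (w * d powr (- s) * Gs s w)"
    using mult_right_mono[OF Gs_lower_bounds(2)[OF s_pos s(3) w], of "d powr (- s)"]
    by (simp add: mult_ac)
  have k2: "0 \<le> 2 * C1 * (max 1 C2)^2" using C by simp
  have k3: "0 \<le> max 1 (3 * C2) * (1 / c) * (2 / s0)" using c s by simp
  have "C2 * w * d0 powr (s - 1) * (26 / s) * kernel_integral s (a * d) T
     + 2 * (C2 * w) powr (1 + s) * T powr (1 - s) / d0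
     + (3 * C2) powr s * w powr s * (c * T) powr (- s) / (s * (1 - \<iota>))
     \<le> C2 * max 1 C1 * (26 / s0) * (4 / a^2 + 1) * (w * d powr (- s) * Gs s w)
       + 2 * C1 * (max 1 C2)^2 * (2 * (w * d powr (- s) * Gs s w))
       + max 1 (3 * C2) * (1 / c) * (2 / s0) * (2 * (w * d powr (- s) * Gs s w))"
    using near_term_le[OF s a d w Tw C d0] exit_term_le[OF s_pos s(3) d w(1) Tw C d0]
      far_term_le[OF s d w(1) Tw C(2) c io(1)] io mult_left_mono[OF W k2] mult_left_mono[OF W k3]
    by linarith
  also have "\<dots> = estimate_constant s0 a c C1 C2 * (w * d powr (- s)) * Gs s w"
    by (simp add: estimate_constant_def algebra_simps)
  finally show ?thesis using d by (simp add: powr_minus_divide)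
qed

section \<open>The modulus of continuity\<close>

lemma exists_scale_with_small_modulus:
  fixes \<omega> :: "real \<Rightarrow> real"
  assumes "continuous_on {0..} \<omega>" "strict_mono_on {0..} \<omega>" "\<omega> 0 = 0" "0 < t0"
  obtains \<tau> where "0 < \<tau>" "\<tau> < t0" "0 < \<omega> \<tau>" "\<omega> \<tau> \<le> 1/4"
proof -
  obtain \<delta> where \<delta>: "0 < \<delta>" "\<And>t. t \<in> {0..} \<Longrightarrow> dist t 0 < \<delta> \<Longrightarrow> dist (\<omega> t) (\<omega> 0) < 1/4"
    using assms(1) unfolding continuous_on_iff by (metis atLeast_iff order_refl zero_less_divide_1_iff zero_less_numeral)
  define \<tau> where "\<tau> = min (\<delta>/2) (t0/2)"
  have \<tau>: "0 < \<tau>" "\<tau> < t0" "\<tau> < \<delta>" using \<delta>(1) assms(4) by (auto simp: \<tau>_def)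
  then have "\<bar>\<omega> \<tau>\<bar> < 1/4" using \<delta>(2)[of \<tau>] assms(3) by (simp add: dist_real_def)
  moreover have "0 < \<omega> \<tau>" using strict_mono_onD[OF assms(2), of 0 \<tau>] \<tau> assms(3) by simp
  ultimately show ?thesis using that \<tau> by simp
qed

lemma inverse_of_times_modulus:
  fixes \<omega> :: "real \<Rightarrow> real"
  assumes cont: "continuous_on {0..} \<omega>" and mono: "strict_mono_on {0..} \<omega>" and \<omega>0: "\<omega> 0 = 0"
    and d: "0 \<le> d" "d \<le> \<tau> * \<omega> \<tau>" and \<tau>: "0 \<le> \<tau>"
  obtains T where "T = the_inv_into {0..} (\<lambda>t. t * \<omega> t) d" "0 \<le> T" "T \<le> \<tau>" "T * \<omega> T = d"
proof -
  have "strict_mono_on {0..} (\<lambda>t. t * \<omega> t)"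
  proof (rule strict_mono_onI)
    fix u v :: real assume uv: "u \<in> {0..}" "v \<in> {0..}" "u < v"
    have "u * \<omega> u \<le> u * \<omega> v" using uv strict_mono_onD[OF mono, of u v] by (intro mult_left_mono) auto
    also have "\<dots> < v * \<omega> v" using uv strict_mono_onD[OF mono, of 0 v] \<omega>0 by (intro mult_strict_right_mono) auto
    finally show "u * \<omega> u < v * \<omega> v" .
  qed
  then have inj: "inj_on (\<lambda>t. t * \<omega> t) {0..}" by (rule strict_mono_on_imp_inj_on)
  have "continuous_on {0..\<tau>} (\<lambda>t. t * \<omega> t)"
    by (intro continuous_intros continuous_on_subset[OF cont]) auto
  then obtain T where T: "0 \<le> T" "T \<le> \<tau>" "T * \<omega> T = d"
    using IVT'[of "\<lambda>t. t * \<omega> t" 0 d \<tau>, OF _ d(2) \<tau>] d(1) by auto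
  have "the_inv_into {0..} (\<lambda>t. t * \<omega> t) (T * \<omega> T) = T"
    by (rule the_inv_into_f_f[OF inj]) (use T in simp)
  then show ?thesis using that[OF _ T] by (simp add: T(3))
qed

lemma modulus_le_powr_growth:
  fixes \<omega> :: "real \<Rightarrow> real"
  assumes "antimono_on {0<..<t0} (\<lambda>t. \<omega> t / t powr \<iota>)" "0 < y" "y \<le> r" "r < t0"
  shows "\<omega> r \<le> \<omega> y * (r / y) powr \<iota>"
proof -
  have "\<omega> r / r powr \<iota> \<le> \<omega> y / y powr \<iota>" using assms unfolding monotone_on_def by auto
  then have "\<omega> r \<le> \<omega> y / y powr \<iota> * r powr \<iota>" using assms by (simp add: divide_le_eq)
  also have "\<dots> = \<omega> y * (r / y) powr \<iota>" using assms by (simp add: powr_divide)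
  finally show ?thesis .
qed

section \<open>The regularized distance along a ray\<close>

lemma dD_nonneg: "dD D y \<ge> 0" by (simp add: dD_def infdist_nonneg)

lemma dD_outside: "y \<notin> D \<Longrightarrow> dD D y = 0"
  using infdist_le[of y "-D" y] dD_nonneg[of D y] by (simp add: dD_def)

lemma dD_pos: "open D \<Longrightarrow> x \<in> D \<Longrightarrow> - D \<noteq> {} \<Longrightarrow> 0 < dD D x"
  unfolding dD_def by (rule infdist_pos_not_in_closed) auto

locale ray =
  fixes D :: "'a::euclidean_space set" and dd :: "'a \<Rightarrow> real" and g :: "'a \<Rightarrow> 'a"
    and \<omega> :: "real \<Rightarrow> real" and C1 C2 L :: real and x \<theta> :: 'a
  assumes openD: "open D"
    and lip: "\<forall>y z. \<bar>dd y - dd z\<bar> \<le> L * dist y z"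
    and comp: "\<forall>y. dD D y / C1 \<le> dd y \<and> dd y \<le> C1 * dD D y"
    and C1: "C1 > 0" and C2: "C2 > 0"
    and der: "\<forall>y\<in>D. (dd has_derivative (\<lambda>h. g y \<bullet> h)) (at y)"
    and gmod: "\<forall>y\<in>D. \<forall>z\<in>D. norm (g y - g z) \<le> C2 * \<omega> (dist y z)"
    and wmono: "mono_on {0..} \<omega>" and wnn: "\<forall>t\<ge>0. \<omega> t \<ge> 0"
    and xD: "x \<in> D" and th: "norm \<theta> = 1" and dpos: "dD D x > 0"
begin

definition "u r = dd (x + r *\<^sub>R \<theta>)"
definition "d0 = dd x"
definition "p = g x \<bullet> \<theta>"
definition "l r = d0 + r * p"

lemma dd_continuous: "continuous_on S dd"
proof -
  have "lipschitz_on (max L 0) UNIV dd"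
    unfolding lipschitz_on_def dist_real_def
  proof safe
    fix y z :: 'a
    have "\<bar>dd y - dd z\<bar> \<le> L * dist y z" using lip by auto
    also have "\<dots> \<le> max L 0 * dist y z" by (intro mult_right_mono) auto
    finally show "\<bar>dd y - dd z\<bar> \<le> max L 0 * dist y z" .
  qed auto
  then have "continuous_on UNIV dd" by (rule lipschitz_on_continuous_on)
  then show ?thesis by (rule continuous_on_subset) auto
qed

lemma u_continuous: "continuous_on S u"
  unfolding u_def by (intro continuous_on_compose2[OF dd_continuous[of UNIV]] continuous_intros) auto

lemma dd_nonneg: "dd y \<ge> 0"
  using comp[rule_format, of y] dD_nonneg[of D y] C1 by (smt (verit) divide_nonneg_pos)

lemma u_nonneg: "u r \<ge> 0" by (simp add: u_def dd_nonneg)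

lemma dd_outside: "y \<notin> D \<Longrightarrow> dd y = 0"
  using comp[rule_format, of y] dD_outside[of y D] dd_nonneg[of y] by simp

lemma d0_bounds: "dD D x / C1 \<le> d0" "d0 \<le> C1 * dD D x" "d0 > 0"
  using comp[rule_format, of x] dpos C1 by (auto simp: d0_def intro: less_le_trans[rotated])

lemma u_zero: "u 0 = d0" by (simp add: u_def d0_def)

lemma u_has_real_derivative:
  assumes "x + t *\<^sub>R \<theta> \<in> D"
  shows "(u has_real_derivative (g (x + t *\<^sub>R \<theta>) \<bullet> \<theta>)) (at t)"
proof -
  have d1: "((\<lambda>t. x + t *\<^sub>R \<theta>) has_derivative (\<lambda>h. h *\<^sub>R \<theta>)) (at t)"
    by (auto intro!: derivative_eq_intros)
  have "((\<lambda>t. dd (x + t *\<^sub>R \<theta>)) has_derivative (\<lambda>h. g (x + t *\<^sub>R \<theta>) \<bullet> (h *\<^sub>R \<theta>))) (at t)"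
    using diff_chain_at[OF d1 der[rule_format, OF assms]] by (simp add: o_def)
  moreover have "(\<lambda>h. g (x + t *\<^sub>R \<theta>) \<bullet> (h *\<^sub>R \<theta>)) = (*) (g (x + t *\<^sub>R \<theta>) \<bullet> \<theta>)"
    by (auto simp: fun_eq_iff)
  ultimately show ?thesis unfolding u_def has_field_derivative_def by simp
qed

lemma ray_mvt:
  assumes "a < b" "\<And>t. a < t \<Longrightarrow> t < b \<Longrightarrow> x + t *\<^sub>R \<theta> \<in> D"
  obtains \<xi> where "a < \<xi>" "\<xi> < b" "x + \<xi> *\<^sub>R \<theta> \<in> D" "u b - u a = (b - a) * (g (x + \<xi> *\<^sub>R \<theta>) \<bullet> \<theta>)"
proof -
  obtain \<xi> where "a < \<xi>" "\<xi> < b" "u b - u a = (\<lambda>h. (g (x + \<xi> *\<^sub>R \<theta>) \<bullet> \<theta>) * h) (b - a)"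
  proof (rule mvt[OF assms(1) u_continuous])
    fix t assume "a < t" "t < b"
    then show "(u has_derivative (\<lambda>h. (g (x + t *\<^sub>R \<theta>) \<bullet> \<theta>) * h)) (at t)"
      using u_has_real_derivative[OF assms(2)] by (simp add: has_field_derivative_def)
  qed auto
  then show ?thesis using that assms(2) by (simp add: mult.commute)
qed

lemma grad_along_ray_close:
  assumes "0 \<le> t" "x + t *\<^sub>R \<theta> \<in> D"
  shows "\<bar>g (x + t *\<^sub>R \<theta>) \<bullet> \<theta> - p\<bar> \<le> C2 * \<omega> t"
proof -
  have "\<bar>g (x + t *\<^sub>R \<theta>) \<bullet> \<theta> - p\<bar> = \<bar>(g (x + t *\<^sub>R \<theta>) - g x) \<bullet> \<theta>\<bar>"
    by (simp add: p_def inner_diff_left)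
  also have "\<dots> \<le> norm (g (x + t *\<^sub>R \<theta>) - g x) * norm \<theta>" by (rule Cauchy_Schwarz_ineq2)
  also have "\<dots> \<le> C2 * \<omega> (dist (x + t *\<^sub>R \<theta>) x)" using gmod assms xD th by auto
  also have "dist (x + t *\<^sub>R \<theta>) x = t" using th assms by (simp add: dist_norm)
  finally show ?thesis .
qed

lemma \<omega>_le: "0 \<le> a \<Longrightarrow> a \<le> b \<Longrightarrow> \<omega> a \<le> \<omega> b"
  using wmono by (auto simp: mono_on_def)

lemma u_minus_l_bound:
  assumes "0 \<le> r" "\<And>t. 0 < t \<Longrightarrow> t < r \<Longrightarrow> x + t *\<^sub>R \<theta> \<in> D"
  shows "\<bar>u r - l r\<bar> \<le> C2 * r * \<omega> r"
proof (cases "r = 0")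
  case True then show ?thesis by (simp add: u_zero l_def)
next
  case False
  then have r: "0 < r" using assms by simp
  obtain \<xi> where \<xi>: "0 < \<xi>" "\<xi> < r" "x + \<xi> *\<^sub>R \<theta> \<in> D" "u r - u 0 = (r - 0) * (g (x + \<xi> *\<^sub>R \<theta>) \<bullet> \<theta>)"
    using ray_mvt[OF r assms(2)] by blast
  have "u r - l r = r * (g (x + \<xi> *\<^sub>R \<theta>) \<bullet> \<theta> - p)" using \<xi> by (simp add: u_zero l_def algebra_simps)
  then have "\<bar>u r - l r\<bar> = r * \<bar>g (x + \<xi> *\<^sub>R \<theta>) \<bullet> \<theta> - p\<bar>" using r by (simp add: abs_mult)
  also have "\<dots> \<le> r * (C2 * \<omega> \<xi>)" using grad_along_ray_close[of \<xi>] \<xi> r by (intro mult_left_mono) auto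
  also have "\<dots> \<le> r * (C2 * \<omega> r)" using \<xi> r C2 wmono by (intro mult_left_mono mono_onD[OF wmono]) (auto simp: mono_on_def)
  finally show ?thesis by (simp add: mult_ac)
qed

lemma closed_exit_set: "closed {t. x + t *\<^sub>R \<theta> \<in> -D}"
proof -
  have "closed ((\<lambda>t. x + t *\<^sub>R \<theta>) -` (-D))"
    using openD by (intro continuous_closed_vimage) (auto intro!: continuous_intros)
  then show ?thesis by (simp add: vimage_def)
qed

lemma first_exit_point:
  assumes "t1 \<in> {a..b}" "x + t1 *\<^sub>R \<theta> \<notin> D"
  obtains rs where "rs \<in> {a..b}" "x + rs *\<^sub>R \<theta> \<notin> D" "\<And>t. a \<le> t \<Longrightarrow> t < rs \<Longrightarrow> x + t *\<^sub>R \<theta> \<in> D"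
proof -
  let ?Z = "{a..b} \<inter> {t. x + t *\<^sub>R \<theta> \<in> -D}"
  have cl: "closed ?Z" using closed_exit_set by auto
  have ne: "?Z \<noteq> {}" using assms by auto
  have bb: "bdd_below ?Z" by (rule bdd_belowI[of _ a]) auto
  have "Inf ?Z \<in> ?Z" by (rule closed_contains_Inf[OF ne bb cl])
  moreover have "x + t *\<^sub>R \<theta> \<in> D" if "a \<le> t" "t < Inf ?Z" for t
  proof (rule ccontr)
    assume "x + t *\<^sub>R \<theta> \<notin> D"
    moreover have "t \<le> b" using \<open>Inf ?Z \<in> ?Z\<close> that by auto
    ultimately have "t \<in> ?Z" using that by auto
    then have "Inf ?Z \<le> t" by (intro cInf_lower bb)
    then show False using that by simp
  qed
  ultimately show ?thesis using that by auto
qed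

lemma last_exit_point:
  assumes "a \<le> b" "x + a *\<^sub>R \<theta> \<notin> D" "x + b *\<^sub>R \<theta> \<in> D"
  obtains r1 where "a \<le> r1" "r1 < b" "x + r1 *\<^sub>R \<theta> \<notin> D" "\<And>t. r1 < t \<Longrightarrow> t \<le> b \<Longrightarrow> x + t *\<^sub>R \<theta> \<in> D"
proof -
  let ?Z = "{a..b} \<inter> {t. x + t *\<^sub>R \<theta> \<in> -D}"
  have cl: "closed ?Z" using closed_exit_set by auto
  have ne: "?Z \<noteq> {}" using assms by auto
  have bb: "bdd_above ?Z" by (rule bdd_aboveI[of _ b]) auto
  have S: "Sup ?Z \<in> ?Z" by (rule closed_contains_Sup[OF ne bb cl])
  moreover have "x + t *\<^sub>R \<theta> \<in> D" if "Sup ?Z < t" "t \<le> b" for t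
  proof (rule ccontr)
    assume "x + t *\<^sub>R \<theta> \<notin> D"
    moreover have "a \<le> t" using S that by auto
    ultimately have "t \<in> ?Z" using that by auto
    then have "t \<le> Sup ?Z" by (intro cSup_upper bb)
    then show False using that by simp
  qed
  moreover have "Sup ?Z \<noteq> b" using S assms by auto
  ultimately show ?thesis using that S by force
qed

definition "is_exit rs \<longleftrightarrow> 0 < rs \<and> x + rs *\<^sub>R \<theta> \<notin> D \<and> (\<forall>t. 0 \<le> t \<and> t < rs \<longrightarrow> x + t *\<^sub>R \<theta> \<in> D)"

lemma is_exit_exists:
  assumes "t1 \<in> {0..r}" "x + t1 *\<^sub>R \<theta> \<notin> D"
  obtains rs where "is_exit rs" "rs \<le> r"
proof -
  obtain rs where rs: "rs \<in> {0..r}" "x + rs *\<^sub>R \<theta> \<notin> D" "\<And>t. 0 \<le> t \<Longrightarrow> t < rs \<Longrightarrow> x + t *\<^sub>R \<theta> \<in> D"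
    using first_exit_point[OF assms] by blast
  have "rs \<noteq> 0" using rs(2) xD by auto
  then have "0 < rs" using rs(1) by simp
  then show ?thesis using that[of rs] rs by (auto simp: is_exit_def)
qed

lemma abs_l_at_exit:
  assumes "is_exit rs"
  shows "\<bar>l rs\<bar> \<le> C2 * rs * \<omega> rs"
proof -
  have "u rs = 0" using assms dd_outside by (auto simp: is_exit_def u_def)
  moreover have "\<bar>u rs - l rs\<bar> \<le> C2 * rs * \<omega> rs"
    using assms by (intro u_minus_l_bound) (auto simp: is_exit_def)
  ultimately show ?thesis by simp
qed

lemma slope_le_at_exit:
  assumes "is_exit rs"
  shows "p \<le> - d0 / rs + C2 * \<omega> rs"
proof -
  have rs: "0 < rs" using assms by (auto simp: is_exit_def)
  obtain \<xi> where \<xi>: "0 < \<xi>" "\<xi> < rs" "x + \<xi> *\<^sub>R \<theta> \<in> D" "u rs - u 0 = (rs - 0) * (g (x + \<xi> *\<^sub>R \<theta>) \<bullet> \<theta>)"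
    using ray_mvt[OF rs] assms by (auto simp: is_exit_def)
  have "u rs = 0" using assms dd_outside by (auto simp: is_exit_def u_def)
  then have e: "g (x + \<xi> *\<^sub>R \<theta>) \<bullet> \<theta> = - d0 / rs" using \<xi> rs by (simp add: u_zero field_simps)
  have "p \<le> g (x + \<xi> *\<^sub>R \<theta>) \<bullet> \<theta> + C2 * \<omega> \<xi>" using grad_along_ray_close[of \<xi>] \<xi> by auto
  also have "\<omega> \<xi> \<le> \<omega> rs" using \<xi> by (intro \<omega>_le) auto
  finally show ?thesis using e C2 by (smt (verit) mult_left_mono)
qed

lemma u_after_exit_le:
  assumes "is_exit rs" "rs \<le> r"
  shows "u r \<le> (r - rs) * max 0 (p + C2 * \<omega> r)"
proof (cases "x + r *\<^sub>R \<theta> \<in> D")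
  case False
  then have "u r = 0" using dd_outside by (simp add: u_def)
  then show ?thesis using assms by simp
next
  case True
  have rsD: "x + rs *\<^sub>R \<theta> \<notin> D" using assms by (auto simp: is_exit_def)
  obtain r1 where r1: "rs \<le> r1" "r1 < r" "x + r1 *\<^sub>R \<theta> \<notin> D" "\<And>t. r1 < t \<Longrightarrow> t \<le> r \<Longrightarrow> x + t *\<^sub>R \<theta> \<in> D"
    using last_exit_point[OF assms(2) rsD True] by blast
  obtain \<xi> where \<xi>: "r1 < \<xi>" "\<xi> < r" "x + \<xi> *\<^sub>R \<theta> \<in> D" "u r - u r1 = (r - r1) * (g (x + \<xi> *\<^sub>R \<theta>) \<bullet> \<theta>)"
    using ray_mvt[OF r1(2)] r1(4) by auto
  have "u r1 = 0" using r1 dd_outside by (simp add: u_def)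
  have rs0: "0 < rs" using assms by (auto simp: is_exit_def)
  have "g (x + \<xi> *\<^sub>R \<theta>) \<bullet> \<theta> \<le> p + C2 * \<omega> \<xi>" using grad_along_ray_close[of \<xi>] \<xi> r1 rs0 by auto
  also have "\<omega> \<xi> \<le> \<omega> r" using \<xi> r1 rs0 by (intro \<omega>_le) auto
  finally have "g (x + \<xi> *\<^sub>R \<theta>) \<bullet> \<theta> \<le> p + C2 * \<omega> r" using C2 by (smt (verit) mult_left_mono)
  then have "u r \<le> (r - r1) * max 0 (p + C2 * \<omega> r)"
    using \<xi> \<open>u r1 = 0\<close> r1 by (smt (verit) mult_left_mono)
  also have "\<dots> \<le> (r - rs) * max 0 (p + C2 * \<omega> r)"
    using r1 by (intro mult_right_mono) auto
  finally show ?thesis .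
qed

lemma l_and_u_le_after_exit:
  assumes rs: "is_exit rs" "rs \<le> r"
  shows "l r \<le> C2 * r * \<omega> r" "u r \<le> 2 * C2 * r * \<omega> r"
proof -
  have rs0: "0 < rs" using rs by (auto simp: is_exit_def)
  have wr: "\<omega> rs \<le> \<omega> r" "0 \<le> \<omega> rs" using \<omega>_le[of rs r] rs rs0 wnn by auto
  have cw: "C2 * \<omega> rs \<le> C2 * \<omega> r" using wr C2 by (intro mult_left_mono) auto
  have "d0 / rs > 0" using d0_bounds rs0 by simp
  then have pb: "p \<le> C2 * \<omega> rs" using slope_le_at_exit[OF rs(1)] by linarith
  have "l r = l rs + (r - rs) * p" by (simp add: l_def algebra_simps)
  also have "\<dots> \<le> C2 * rs * \<omega> rs + (r - rs) * (C2 * \<omega> rs)"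
    using abs_l_at_exit[OF rs(1)] pb rs by (intro add_mono mult_left_mono) auto
  also have "\<dots> \<le> C2 * rs * \<omega> r + (r - rs) * (C2 * \<omega> r)"
    using wr cw C2 rs0 rs by (intro add_mono mult_left_mono) auto
  also have "\<dots> = C2 * r * \<omega> r" by (simp add: algebra_simps)
  finally show "l r \<le> C2 * r * \<omega> r" .
  have "p + C2 * \<omega> r \<le> 2 * C2 * \<omega> r" using pb cw by linarith
  then have "max 0 (p + C2 * \<omega> r) \<le> 2 * C2 * \<omega> r" using C2 wr by simp
  then have "u r \<le> (r - rs) * (2 * C2 * \<omega> r)"
    using u_after_exit_le[OF rs] rs by (smt (verit) mult_left_mono)
  also have "\<dots> \<le> r * (2 * C2 * \<omega> r)" using rs0 C2 wr by (intro mult_right_mono) auto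
  finally show "u r \<le> 2 * C2 * r * \<omega> r" by (simp add: mult_ac)
qed

lemma numerator_le_crude:
  assumes "0 < r" "0 < s" "s < 1"
  shows "\<bar>u r powr s - posp (l r) powr s\<bar> \<le> (3 * C2 * r * \<omega> r) powr s"
proof -
  have nn: "0 \<le> C2 * r * \<omega> r" using C2 assms wnn by simp
  have pl0: "0 \<le> posp (l r)" by (simp add: posp_def)
  show ?thesis
  proof (cases "\<forall>t. 0 < t \<and> t < r \<longrightarrow> x + t *\<^sub>R \<theta> \<in> D")
    case True
    have "\<bar>u r - l r\<bar> \<le> C2 * r * \<omega> r" using True assms by (intro u_minus_l_bound) auto
    moreover have "\<bar>u r - posp (l r)\<bar> \<le> \<bar>u r - l r\<bar>" using u_nonneg[of r] by (auto simp: posp_def)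
    ultimately have "\<bar>u r - posp (l r)\<bar> \<le> 3 * C2 * r * \<omega> r" using nn by linarith
    moreover have "\<bar>u r powr s - posp (l r) powr s\<bar> \<le> \<bar>u r - posp (l r)\<bar> powr s"
      using u_nonneg[of r] pl0 assms by (intro abs_powr_diff_le_powr_abs_diff) auto
    ultimately show ?thesis using assms by (meson abs_ge_zero order_trans powr_mono2 less_imp_le)
  next
    case False
    then obtain t1 where t1: "0 < t1" "t1 < r" "x + t1 *\<^sub>R \<theta> \<notin> D" by blast
    obtain rs where rs: "is_exit rs" "rs \<le> r"
      by (rule is_exit_exists[of t1 r]) (use t1 in auto)
    have "posp (l r) \<le> 3 * C2 * r * \<omega> r" "u r \<le> 3 * C2 * r * \<omega> r"
      using l_and_u_le_after_exit[OF rs] nn by (auto simp: posp_def)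
    then show ?thesis using abs_powr_diff_le_powr_bound[OF u_nonneg pl0 _ _ assms(2)] by blast
  qed
qed

lemma numerator_le_before_exit:
  assumes "0 < r" "0 < s" "s < 1" "\<And>t. 0 < t \<Longrightarrow> t < r \<Longrightarrow> x + t *\<^sub>R \<theta> \<in> D"
    "l r \<noteq> 0" "\<omega> r \<le> w"
  shows "\<bar>u r powr s - posp (l r) powr s\<bar> \<le> C2 * w * r * \<bar>l r\<bar> powr (s - 1)"
proof -
  have fo: "\<bar>u r - l r\<bar> \<le> C2 * r * \<omega> r" using assms by (intro u_minus_l_bound) auto
  also have "\<dots> \<le> C2 * r * w" by (rule mult_left_mono[OF assms(6)]) (use C2 assms(1) in simp)
  also have "\<dots> = C2 * w * r" by (simp add: mult_ac)
  finally have "\<bar>u r - l r\<bar> \<le> C2 * w * r" .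
  then show ?thesis by (rule abs_powr_diff_posp_le[OF u_nonneg[of r] _ assms(5) assms(2) assms(3)])
qed

lemma slope_after_early_exit:
  assumes rs: "is_exit rs" "rs \<le> r" and early: "4 * C2 * \<omega> r * rs \<le> d0"
  shows "p + C2 * \<omega> r \<le> 0" "p \<le> - d0 / (2 * rs)"
proof -
  have rs0: "0 < rs" using rs by (auto simp: is_exit_def)
  have "C2 * \<omega> rs \<le> C2 * \<omega> r" using \<omega>_le[of rs r] rs rs0 C2 by (intro mult_left_mono) auto
  moreover have "C2 * \<omega> r \<le> d0 / (4 * rs)" using early rs0 by (simp add: pos_le_divide_eq mult_ac)
  moreover have "p \<le> - d0 / rs + C2 * \<omega> rs" by (rule slope_le_at_exit[OF rs(1)])
  moreover have "0 < d0 / rs" using d0_bounds rs0 by simp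
  ultimately show "p + C2 * \<omega> r \<le> 0" "p \<le> - d0 / (2 * rs)" by (simp_all add: field_simps)
qed

lemma numerator_after_exit:
  assumes rs: "is_exit rs" "rs \<le> r" and s: "0 < s" "s < 1" and early: "4 * C2 * \<omega> r * rs \<le> d0"
  shows "\<bar>u r powr s - posp (l r) powr s\<bar> \<le>
     (if r \<le> rs + 2 * rs * (C2 * rs * \<omega> rs) / d0 then (C2 * rs * \<omega> rs) powr s else 0)"
proof -
  define E where "E = C2 * rs * \<omega> rs"
  have rs0: "0 < rs" and d0_pos: "0 < d0" using rs d0_bounds by (auto simp: is_exit_def)
  have "u r \<le> 0" using u_after_exit_le[OF rs] slope_after_early_exit(1)[OF rs early] by simp
  then have u_zero: "u r = 0" using u_nonneg[of r] by simp
  have "(r - rs) * p \<le> (r - rs) * (- d0 / (2 * rs))"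
    using slope_after_early_exit(2)[OF rs early] rs by (intro mult_left_mono) auto
  moreover have "l r = l rs + (r - rs) * p" by (simp add: l_def algebra_simps)
  moreover have "l rs \<le> E" using abs_l_at_exit[OF rs(1)] by (simp add: E_def)
  ultimately have lb: "l r \<le> E - (r - rs) * d0 / (2 * rs)" by simp
  show ?thesis
  proof (cases "r \<le> rs + 2 * rs * E / d0")
    case True
    have "0 \<le> (r - rs) * d0 / (2 * rs)" "0 \<le> E" using rs rs0 d0_pos C2 wnn by (simp_all add: E_def)
    then have "posp (l r) \<le> E" using lb by (simp add: posp_def)
    then have "posp (l r) powr s \<le> E powr s" using s by (intro powr_mono2) (auto simp: posp_def)
    then show ?thesis using True u_zero s by (simp add: E_def[symmetric] posp_def)
  next
    case False
    then have "E < (r - rs) * d0 / (2 * rs)" using d0_pos rs0 by (simp add: field_simps)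
    then have "posp (l r) = 0" using lb by (simp add: posp_def)
    then show ?thesis using False u_zero by (simp add: E_def[symmetric])
  qed
qed

definition "integrand s r = \<bar>u r powr s - posp (l r) powr s\<bar> / r powr (1 + 2 * s)"

lemma posp_l_continuous: "continuous_on S (\<lambda>r. posp (l r))"
  unfolding posp_def l_def by (intro continuous_intros)

lemma integrand_continuous:
  assumes "0 < s"
  shows "continuous_on {0<..} (integrand s)"
proof -
  have c1: "continuous_on {0<..} (\<lambda>r. u r powr s)"
    by (rule continuous_on_powr'[OF u_continuous continuous_on_const]) (use u_nonneg assms in auto)
  have c2: "continuous_on {0<..} (\<lambda>r. posp (l r) powr s)"
    by (rule continuous_on_powr'[OF posp_l_continuous continuous_on_const]) (use assms in \<open>auto simp: posp_def\<close>)
  have c3: "continuous_on {0<..} (\<lambda>r::real. r powr (1 + 2 * s))"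
    by (rule continuous_on_powr'[OF continuous_on_id continuous_on_const]) (use assms in auto)
  show ?thesis unfolding integrand_def
    by (intro continuous_on_divide continuous_on_rabs continuous_on_diff c1 c2 c3) auto
qed

lemma integrand_nonneg: "0 \<le> integrand s r" by (simp add: integrand_def)

lemma integrand_le_crude:
  assumes "0 < r" "0 < s" "s < 1"
  shows "integrand s r \<le> (3 * C2 * r * \<omega> r) powr s / r powr (1 + 2 * s)"
  unfolding integrand_def by (rule divide_right_mono[OF numerator_le_crude[OF assms]]) simp

lemma integrand_le_before_exit:
  assumes s: "0 < s" "s < 1" and r0: "0 < r" and fo: "\<And>t. 0 < t \<Longrightarrow> t < r \<Longrightarrow> x + t *\<^sub>R \<theta> \<in> D"
    and lr: "l r \<noteq> 0" and hw: "\<omega> r \<le> w"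
  shows "integrand s r \<le> C2 * w * (r powr (- 2 * s) * \<bar>l r\<bar> powr (s - 1))"
proof -
  have "integrand s r \<le> C2 * w * r * \<bar>l r\<bar> powr (s - 1) / r powr (1 + 2 * s)"
    unfolding integrand_def by (rule divide_right_mono[OF numerator_le_before_exit[OF r0 s fo lr hw]]) (use powr_ge_zero in auto)
  also have "r / r powr (1 + 2 * s) = r powr (- 2 * s)"
  proof -
    have "r powr (1 - (1 + 2 * s)) = r powr 1 / r powr (1 + 2 * s)" by (rule powr_diff)
    then show ?thesis using r0 by simp
  qed
  then have "C2 * w * r * \<bar>l r\<bar> powr (s - 1) / r powr (1 + 2 * s) = C2 * w * (r powr (- 2 * s) * \<bar>l r\<bar> powr (s - 1))"
    by (metis (no_types, lifting) mult.commute mult.left_commute times_divide_eq_right)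
  finally show ?thesis .
qed

lemma integral_le_before_exit:
  assumes s: "0 < s" "s < 1" and A: "0 < A" "2 * A \<le> B" "m \<le> B"
    and fo: "\<And>t. 0 < t \<Longrightarrow> t < m \<Longrightarrow> x + t *\<^sub>R \<theta> \<in> D"
    and hw: "\<And>r. 0 \<le> r \<Longrightarrow> r \<le> m \<Longrightarrow> \<omega> r \<le> w" and w0: "0 \<le> w"
  shows "integral {A..m} (integrand s) \<le> C2 * w * d0 powr (s - 1) * (26 / s) * kernel_integral s A B"
proof (rule integral_le_kernel_affine_powr[OF s A])
  show "0 < d0" using d0_bounds by simp
  show "0 \<le> C2 * w" using C2 w0 by simp
  show "continuous_on {A..m} (integrand s)"
    by (rule continuous_on_subset[OF integrand_continuous[OF s(1)]]) (use A in auto)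
  fix r assume r: "r \<in> {A..m}" "d0 + p * r \<noteq> 0"
  have l: "l r = d0 + p * r" by (simp add: l_def mult.commute)
  show "integrand s r \<le> C2 * w * (r powr (- 2 * s) * \<bar>d0 + p * r\<bar> powr (s - 1))"
    using integrand_le_before_exit[OF s, of r w] r A fo hw unfolding l by auto
qed

lemma integral_le_after_exit:
  assumes s: "0 < s" "s < 1" and rs: "is_exit rs"
    and hb: "\<And>r. rs \<le> r \<Longrightarrow> r \<le> b \<Longrightarrow> 4 * C2 * \<omega> r * rs \<le> d0"
  shows "integral {rs..b} (integrand s)
    \<le> 2 * rs * (C2 * rs * \<omega> rs) / d0 * ((C2 * rs * \<omega> rs) powr s / rs powr (1 + 2 * s))"
proof (rule integral_le_step_bound)
  define E where "E = C2 * rs * \<omega> rs"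
  have rs0: "0 < rs" using rs by (auto simp: is_exit_def)
  show "continuous_on {rs..b} (integrand s)"
    by (rule continuous_on_subset[OF integrand_continuous[OF s(1)]]) (use rs0 in auto)
  show "0 \<le> 2 * rs * E / d0" using rs0 C2 wnn d0_bounds by (simp add: E_def)
  show "0 \<le> E powr s / rs powr (1 + 2 * s)" by simp
  fix r assume r: "r \<in> {rs..b}"
  have num: "\<bar>u r powr s - posp (l r) powr s\<bar> \<le> (if r \<le> rs + 2 * rs * E / d0 then E powr s else 0)"
    unfolding E_def by (rule numerator_after_exit[OF rs _ s hb[of r]]) (use r in auto)
  show "integrand s r \<le> (if r \<le> rs + 2 * rs * E / d0 then E powr s / rs powr (1 + 2 * s) else 0)"
  proof (cases "r \<le> rs + 2 * rs * E / d0")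
    case True
    then have "integrand s r \<le> E powr s / r powr (1 + 2 * s)"
      using num unfolding integrand_def by (simp add: divide_right_mono)
    also have "\<dots> \<le> E powr s / rs powr (1 + 2 * s)"
      using r rs0 s by (intro divide_left_mono powr_mono2 mult_pos_pos) auto
    finally show ?thesis using True by simp
  qed (use num in \<open>simp add: integrand_def\<close>)
qed

lemma integral_le_after_early_exit:
  assumes s: "0 < s" "s < 1" and rs: "is_exit rs" "rs \<le> T" and w: "\<omega> rs \<le> w"
    and hb: "\<And>r. rs \<le> r \<Longrightarrow> r \<le> b \<Longrightarrow> 4 * C2 * \<omega> r * rs \<le> d0"
  shows "integral {rs..b} (integrand s) \<le> 2 * (C2 * w) powr (1 + s) * T powr (1 - s) / d0"
proof -
  have rs0: "0 < rs" using rs by (auto simp: is_exit_def)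
  have E: "0 \<le> C2 * rs * \<omega> rs" "C2 * rs * \<omega> rs \<le> (C2 * w) * rs"
    using C2 rs0 wnn w by (auto simp: mult_ac intro: mult_left_mono)
  show ?thesis
    using integral_le_after_exit[OF s rs(1) hb] exit_bump_le[OF rs0 rs(2) E _ s] d0_bounds(3)
    by (meson order_trans)
qed

lemma integrand_le_far:
  assumes s: "0 < s" "s < 1" and Y: "0 < Y" "Y \<le> r" and W: "0 \<le> W" and hw: "\<omega> r \<le> W * (r / Y) powr \<iota>"
  shows "integrand s r \<le> (3 * C2) powr s * W powr s * Y powr (- (\<iota> * s)) * r powr (\<iota> * s - 1 - s)"
proof -
  have r0: "0 < r" using Y by simp
  have "integrand s r \<le> (3 * C2 * r * \<omega> r) powr s / r powr (1 + 2 * s)" by (rule integrand_le_crude[OF r0 s])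
  also have "\<dots> \<le> (3 * C2 * r * (W * (r / Y) powr \<iota>)) powr s / r powr (1 + 2 * s)"
  proof (intro divide_right_mono powr_mono2)
    show "0 \<le> 3 * C2 * r * \<omega> r" using C2 r0 wnn by simp
    show "3 * C2 * r * \<omega> r \<le> 3 * C2 * r * (W * (r / Y) powr \<iota>)"
      using hw C2 r0 by (intro mult_left_mono) auto
  qed (use s in auto)
  also have "(3 * C2 * r * (W * (r / Y) powr \<iota>)) powr s
      = (3 * C2) powr s * W powr s * Y powr (- (\<iota> * s)) * (r powr s * r powr (\<iota> * s))"
    using r0 Y C2 W by (simp add: powr_mult powr_powr powr_divide powr_minus_divide mult_ac)
  also have "r powr s * r powr (\<iota> * s) = r powr (\<iota> * s - 1 - s) * r powr (1 + 2 * s)"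
  proof -
    have e: "s + \<iota> * s = (\<iota> * s - 1 - s) + (1 + 2 * s)" by simp
    show ?thesis by (simp only: powr_add[symmetric] e)
  qed
  finally show ?thesis using r0 by simp
qed

lemma integral_le_far:
  assumes s: "0 < s" "s < 1" and io: "0 < \<iota>" "\<iota> < 1" and Y: "0 < Y" and W: "0 \<le> W"
    and YX: "Y \<le> X \<or> R \<le> X"
    and hw: "\<And>r. Y \<le> r \<Longrightarrow> r \<le> R \<Longrightarrow> \<omega> r \<le> W * (r / Y) powr \<iota>"
  shows "integral {X..R} (integrand s) \<le> (3 * C2) powr s * W powr s * Y powr (- s) / (s * (1 - \<iota>))"
proof (cases "Y \<le> X")
  case True
  define \<gamma> where "\<gamma> = \<iota> * s - 1 - s"
  have "integral {X..R} (integrand s) \<le> (3 * C2) powr s * W powr s * Y powr (- (\<iota> * s)) * Y powr (\<gamma> + 1) / - (\<gamma> + 1)"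
  proof (rule integral_le_powr_tail[OF _ Y True])
    show "continuous_on {X..R} (integrand s)"
      by (rule continuous_on_subset[OF integrand_continuous[OF s(1)]]) (use Y True in auto)
    show "\<gamma> < -1" using s io by (simp add: \<gamma>_def)
    show "integrand s r \<le> (3 * C2) powr s * W powr s * Y powr (- (\<iota> * s)) * r powr \<gamma>" if "r \<in> {X..R}" for r
      unfolding \<gamma>_def by (rule integrand_le_far[OF s Y _ W hw]) (use that True in auto)
  qed simp
  also have "\<dots> = (3 * C2) powr s * W powr s * (Y powr (- (\<iota> * s)) * Y powr (\<gamma> + 1)) / - (\<gamma> + 1)"
    by (simp only: mult.assoc)
  also have "Y powr (- (\<iota> * s)) * Y powr (\<gamma> + 1) = Y powr (- s)" by (simp add: \<gamma>_def powr_add[symmetric])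
  also have "- (\<gamma> + 1) = s * (1 - \<iota>)" by (simp add: \<gamma>_def algebra_simps)
  finally show ?thesis .
next
  case False
  then have "R \<le> X" using YX by simp
  then have "integral {X..R} (integrand s) = 0" by (cases "X = R") auto
  then show ?thesis using s io by simp
qed

end

text \<open>In the application \<open>A = a d\<^sub>D(x)\<close>, \<open>T\<close> solves \<open>T \<omega>(T) = d\<^sub>D(x)\<close> and \<open>w = \<omega>(T)\<close>;
  beyond \<open>c T\<close> only the crude estimate is used.\<close>

locale ray_scales = ray +
  fixes s \<iota> A T c R w :: real
  assumes s: "0 < s" "s < 1" and io: "0 < \<iota>" "\<iota> < 1" and A: "0 < A" "2 * A \<le> T"
    and c: "0 < c" "c \<le> 1" and R: "0 < R"
    and modulus_below_T: "\<And>r. 0 \<le> r \<Longrightarrow> r \<le> T \<Longrightarrow> \<omega> r \<le> w"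
    and modulus_growth: "\<And>r. c * T \<le> r \<Longrightarrow> r \<le> R \<Longrightarrow> \<omega> r \<le> w * (r / (c * T)) powr \<iota>"
    and slope_scale: "4 * C2 * w * (c * T) \<le> d0"
begin

definition "near_bound = C2 * w * d0 powr (s - 1) * (26 / s) * kernel_integral s A T"
definition "exit_bound = 2 * (C2 * w) powr (1 + s) * T powr (1 - s) / d0"
definition "far_bound = (3 * C2) powr s * w powr s * (c * T) powr (- s) / (s * (1 - \<iota>))"

lemma T_pos: "0 < T" using A by simp

lemma cT_le_T: "c * T \<le> T"
  using c T_pos by (simp add: mult_le_cancel_right1)

lemma w_nonneg: "0 \<le> w" using modulus_below_T[of 0] T_pos wnn by fastforce

lemma exit_bound_nonneg: "0 \<le> exit_bound" using d0_bounds by (simp add: exit_bound_def)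

lemma integral_split: "0 < a \<Longrightarrow> 0 < m \<Longrightarrow>
    integral {a..b} (integrand s) \<le> integral {a..m} (integrand s) + integral {m..b} (integrand s)"
  by (rule integral_le_split[OF integrand_continuous[OF s(1)] integrand_nonneg])

lemma integral_le_near_bound:
  "m \<le> T \<Longrightarrow> (\<And>t. 0 < t \<Longrightarrow> t < m \<Longrightarrow> x + t *\<^sub>R \<theta> \<in> D) \<Longrightarrow> integral {A..m} (integrand s) \<le> near_bound"
  unfolding near_bound_def
  by (rule integral_le_before_exit[OF s A]) (use modulus_below_T w_nonneg in auto)

lemma integral_le_far_bound: "c * T \<le> X \<or> R \<le> X \<Longrightarrow> integral {X..R} (integrand s) \<le> far_bound"
  unfolding far_bound_def
  by (rule integral_le_far[OF s io _ w_nonneg _ modulus_growth]) (use c T_pos in auto)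

lemma integral_le_if_stays_inside:
  assumes m: "0 < m" "m \<le> T" "c * T \<le> m \<or> R \<le> m" and inside: "\<And>t. 0 < t \<Longrightarrow> t < m \<Longrightarrow> x + t *\<^sub>R \<theta> \<in> D"
  shows "integral {A..R} (integrand s) \<le> near_bound + exit_bound + far_bound"
proof -
  have "integral {A..R} (integrand s) \<le> integral {A..m} (integrand s) + integral {m..R} (integrand s)"
    by (rule integral_split[OF A(1) m(1)])
  also have "\<dots> \<le> near_bound + far_bound"
    using integral_le_near_bound[OF m(2) inside] integral_le_far_bound[OF m(3)] by simp
  finally show ?thesis using exit_bound_nonneg by simp
qed

lemma integral_le_if_early_exit:
  assumes rs: "is_exit rs" "rs < c * T"
  shows "integral {A..R} (integrand s) \<le> near_bound + exit_bound + far_bound"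
proof -
  define m where "m = min T R"
  have rs0: "0 < rs" using rs by (auto simp: is_exit_def)
  have m0: "0 < m" using T_pos R by (simp add: m_def)
  have rsT: "rs \<le> T" using rs cT_le_T by simp
  have "integral {A..R} (integrand s) \<le> integral {A..rs} (integrand s) + integral {rs..R} (integrand s)"
    by (rule integral_split[OF A(1) rs0])
  also have "integral {rs..R} (integrand s) \<le> integral {rs..m} (integrand s) + integral {m..R} (integrand s)"
    by (rule integral_split[OF rs0 m0])
  also have "integral {A..rs} (integrand s) \<le> near_bound"
    by (rule integral_le_near_bound[OF rsT]) (use rs(1) in \<open>auto simp: is_exit_def\<close>)
  also have "integral {rs..m} (integrand s) \<le> exit_bound"
    unfolding exit_bound_def
  proof (rule integral_le_after_early_exit[OF s rs(1) rsT])
    show "\<omega> rs \<le> w" using rsT rs0 by (intro modulus_below_T) auto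
    fix r assume r: "rs \<le> r" "r \<le> m"
    have "\<omega> r \<le> w" "0 \<le> \<omega> r" using r rs0 modulus_below_T[of r] wnn by (auto simp: m_def)
    then have "4 * C2 * \<omega> r * rs \<le> 4 * C2 * w * (c * T)"
      using rs(2) C2 rs0 by (intro mult_mono) auto
    then show "4 * C2 * \<omega> r * rs \<le> d0" using slope_scale by simp
  qed
  also have "integral {m..R} (integrand s) \<le> far_bound"
    using cT_le_T by (intro integral_le_far_bound) (auto simp: m_def)
  finally show ?thesis by simp
qed

lemma integral_le_bounds: "integral {A..R} (integrand s) \<le> near_bound + exit_bound + far_bound"
proof (cases "\<exists>t\<in>{0..R}. x + t *\<^sub>R \<theta> \<notin> D")
  case False
  then show ?thesis
    using T_pos R cT_le_T
    by (intro integral_le_if_stays_inside[of "min T R"]) (auto simp: min_def split: if_split_asm)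
next
  case True
  then obtain t1 where t1: "t1 \<in> {0..R}" "x + t1 *\<^sub>R \<theta> \<notin> D" by blast
  obtain rs where rs: "is_exit rs" "rs \<le> R" by (rule is_exit_exists[OF t1])
  show ?thesis
  proof (cases "rs < c * T")
    case True
    then show ?thesis by (rule integral_le_if_early_exit[OF rs(1)])
  next
    case False
    then show ?thesis
      using rs T_pos cT_le_T
      by (intro integral_le_if_stays_inside[of "min rs T"]) (auto simp: is_exit_def)
  qed
qed

end

context ray begin

lemma integral_le_estimate:
  assumes s: "0 < s0" "s0 \<le> s" "s < 1" and a: "0 < a" "a < 1/4" and io: "0 < \<iota>" "\<iota> \<le> 1/6"
    and c: "0 < c" "c \<le> 1" "4 * C2 * c \<le> 1 / C1"
    and T: "0 \<le> T" "T * \<omega> T = dD D x" "\<omega> T \<le> 1/4" and R: "0 < R"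
    and growth: "\<And>r. c * T \<le> r \<Longrightarrow> r \<le> R \<Longrightarrow> \<omega> r \<le> \<omega> T * (r / (c * T)) powr \<iota>"
  shows "integral {a * dD D x..R} (integrand s)
    \<le> estimate_constant s0 a c C1 C2 * (\<omega> T / dD D x powr s) * Gs s (\<omega> T)"
proof -
  have "T \<noteq> 0" using T(2) dpos by auto
  then have T_pos: "0 < T" using T(1) by simp
  have "0 < T * \<omega> T" using T(2) dpos by simp
  then have w_pos: "0 < \<omega> T" using T_pos by (simp add: zero_less_mult_iff)
  have "dD D x \<le> T / 4" using T mult_left_mono[OF T(3) T(1)] by simp
  moreover have "2 * (a * dD D x) \<le> 2 * (1/4 * dD D x)"
    using a dpos by (intro mult_left_mono mult_right_mono) auto
  ultimately have AT: "2 * (a * dD D x) \<le> T" using T_pos by linarith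
  have "4 * C2 * \<omega> T * (c * T) = (4 * C2 * c) * dD D x" using T(2) by (simp add: mult_ac)
  also have "\<dots> \<le> d0" using c dpos d0_bounds(1) mult_right_mono[OF c(3), of "dD D x"] by simp
  finally have slope: "4 * C2 * \<omega> T * (c * T) \<le> d0" .
  interpret S: ray_scales D dd g \<omega> C1 C2 L x \<theta> s \<iota> "a * dD D x" T c R "\<omega> T"
    using s io a dpos AT c R growth slope \<omega>_le
    by (intro ray_scales.intro ray_axioms ray_scales_axioms.intro) auto
  have "integral {a * dD D x..R} (integrand s) \<le> S.near_bound + S.exit_bound + S.far_bound"
    by (rule S.integral_le_bounds)
  also have "\<dots> \<le> estimate_constant s0 a c C1 C2 * (\<omega> T / dD D x powr s) * Gs s (\<omega> T)"
    unfolding S.near_bound_def S.exit_bound_def S.far_bound_def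
    by (rule three_terms_le[OF s a dpos w_pos T(3,2) C1 C2 d0_bounds(1) c(1,2) io])
  finally show ?thesis .
qed

end

lemma regularized_distance_whole_space:
  assumes rd: "regularized_distance D \<omega> \<dd> g C1 C2 C3" and D: "- D = {}"
  shows "\<dd> y = 0" "g y = 0"
proof -
  from rd have comp: "\<forall>y. dD D y / C1 \<le> \<dd> y \<and> \<dd> y \<le> C1 * dD D y"
    and der: "\<forall>y\<in>D. (\<dd> has_derivative (\<lambda>h. g y \<bullet> h)) (at y)"
    unfolding regularized_distance_def by blast+
  have "dD D y = 0" for y using D by (simp add: dD_def infdist_def)
  then have dd0: "\<dd> = (\<lambda>_. 0)" using comp by (auto simp: fun_eq_iff intro: order_antisym)
  then show "\<dd> y = 0" by simp
  have "((\<lambda>_. 0::real) has_derivative (\<lambda>h. g y \<bullet> h)) (at y)" using der D dd0 by auto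
  then have "(\<lambda>h. g y \<bullet> h) = (\<lambda>h. 0)" by (rule has_derivative_unique) (rule has_derivative_const)
  then show "g y = 0" by (metis inner_eq_zero_iff)
qed

lemma regularized_distance_ray_estimate:
  fixes D :: "'a::euclidean_space set"
  assumes rd: "regularized_distance D \<omega> \<dd> g C1 C2 C3" and D: "open D"
    and \<omega>: "strict_mono_on {0..} \<omega>" "\<omega> 0 = 0" and x: "x \<in> D" "norm \<theta> = 1"
    and s: "0 < s0" "s0 \<le> s" "s < 1" and a: "0 < a" "a < 1/4" and io: "0 < \<iota>" "\<iota> \<le> 1/6"
    and c: "0 < c" "c \<le> 1" "4 * C2 * c \<le> 1 / C1"
    and T: "0 \<le> T" "T * \<omega> T = dD D x" "\<omega> T \<le> 1/4" and R: "0 < R" "R < t0"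
    and ratio: "antimono_on {0<..<t0} (\<lambda>t. \<omega> t / t powr \<iota>)"
  shows "integral {a * dD D x..R}
      (\<lambda>r. \<bar>\<dd> (x + r *\<^sub>R \<theta>) powr s - posp (\<dd> x + g x \<bullet> (r *\<^sub>R \<theta>)) powr s\<bar> / r powr (1 + 2 * s))
    \<le> estimate_constant s0 a c C1 C2 * (\<omega> T / dD D x powr s) * Gs s (\<omega> T)"
proof (cases "- D = {}")
  case True
  have "T * \<omega> T = 0" using T(2) by (simp add: dD_def infdist_def True)
  then have "T = 0"
    using T(1) strict_mono_onD[OF \<omega>(1), of 0 T] \<omega>(2) by (cases "0 < T") auto
  then show ?thesis
    using regularized_distance_whole_space[OF rd True] \<omega> by (simp add: posp_def)
next
  case False
  from rd obtain L where lip: "\<forall>y z. \<bar>\<dd> y - \<dd> z\<bar> \<le> L * dist y z"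
    unfolding regularized_distance_def by blast
  have \<omega>_mono: "mono_on {0..} \<omega>" using \<omega>(1) by (rule strict_mono_on_imp_mono_on)
  interpret ray D \<dd> g \<omega> C1 C2 L x \<theta>
  proof
    show "\<forall>t\<ge>0. 0 \<le> \<omega> t" using mono_onD[OF \<omega>_mono, of 0] \<omega>(2) by auto
    show "0 < dD D x" by (rule dD_pos[OF D x(1) False])
  qed (use rd D lip \<omega>_mono x in \<open>auto simp: regularized_distance_def\<close>)
  have integrand: "(\<lambda>r. \<bar>\<dd> (x + r *\<^sub>R \<theta>) powr s - posp (\<dd> x + g x \<bullet> (r *\<^sub>R \<theta>)) powr s\<bar> / r powr (1 + 2 * s))
      = integrand s"
    by (simp add: fun_eq_iff integrand_def u_def l_def d0_def p_def mult.commute)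
  have "0 < T" using T dpos by (auto simp: order_le_less)
  have growth: "\<omega> r \<le> \<omega> T * (r / (c * T)) powr \<iota>" if "c * T \<le> r" "r \<le> R" for r
  proof -
    have "\<omega> r \<le> \<omega> (c * T) * (r / (c * T)) powr \<iota>"
      by (rule modulus_le_powr_growth[OF ratio]) (use \<open>0 < T\<close> c that R in auto)
    also have "\<dots> \<le> \<omega> T * (r / (c * T)) powr \<iota>"
      using \<open>0 < T\<close> c by (intro mult_right_mono \<omega>_le) (auto simp: mult_le_cancel_right1)
    finally show ?thesis .
  qed
  show ?thesis
    unfolding integrand by (rule integral_le_estimate[OF s a io c T R(1) growth])
qed

theorem lemma5p3:
  fixes D :: "'a::euclidean_space set" and \<omega> :: "real \<Rightarrow> real"
    and \<dd> :: "'a \<Rightarrow> real" and g :: "'a \<Rightarrow> 'a"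
    and s0 a \<rho> C0 C1 C2 C3 :: real
  assumes "0 < s0" "s0 < 1" "0 < a" "a < 1/4"
    and "uniform_C1dini_domain D \<omega> \<rho> C0"
    and "condM (min (1/6) (s0/4)) \<omega>"
    and "regularized_distance D \<omega> \<dd> g C1 C2 C3"
  shows "\<exists>\<rho>1 C. 0 < \<rho>1 \<and> \<rho>1 < \<rho> \<and> C > 0 \<and>
    (\<forall>s\<in>{s0..<1}. \<forall>x\<in>D. dD D x < \<rho>1 / 2 \<longrightarrow> (\<forall>\<theta>::'a. norm \<theta> = 1 \<longrightarrow>
       integral {a * dD D x..\<rho>1}
         (\<lambda>r. \<bar>\<dd> (x + r *\<^sub>R \<theta>) powr s - posp (\<dd> x + g x \<bullet> (r *\<^sub>R \<theta>)) powr s\<bar>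
               / r powr (1 + 2 * s))
       \<le> C * (\<omega> (the_inv_into {0..} (\<lambda>t. t * \<omega> t) (dD D x)) / dD D x powr s)
           * Gs s (\<omega> (the_inv_into {0..} (\<lambda>t. t * \<omega> t) (dD D x)))))"
proof -
  define \<iota> where "\<iota> = min (1/6) (s0/4)"
  have io: "0 < \<iota>" "\<iota> \<le> 1/6" using assms(1) by (auto simp: \<iota>_def)
  obtain t0 where cont: "continuous_on {0..} \<omega>" and mono: "strict_mono_on {0..} \<omega>" and \<omega>0: "\<omega> 0 = 0"
    and t0: "0 < t0" "antimono_on {0<..<t0} (\<lambda>t. \<omega> t / t powr \<iota>)"
    using assms(6) unfolding condM_def \<iota>_def by blast
  obtain \<tau> where \<tau>: "0 < \<tau>" "\<tau> < t0" and \<omega>\<tau>: "0 < \<omega> \<tau>" "\<omega> \<tau> \<le> 1/4"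
    using exists_scale_with_small_modulus[OF cont mono \<omega>0 t0(1)] by blast
  then have "\<tau> * \<omega> \<tau> < t0" using \<tau> mult_left_mono[of "\<omega> \<tau>" "1/4" \<tau>] by linarith
  have \<rho>: "0 < \<rho>" and D: "open D" and C: "0 < C1" "0 < C2"
    using assms(5,7) unfolding uniform_C1dini_domain_def regularized_distance_def by auto
  define \<rho>1 where "\<rho>1 = min (\<rho>/2) (\<tau> * \<omega> \<tau>)"
  have \<rho>1: "0 < \<rho>1" "\<rho>1 < \<rho>" "\<rho>1 < t0"
    using \<rho> \<tau> \<omega>\<tau> \<open>\<tau> * \<omega> \<tau> < t0\<close> by (auto simp: \<rho>1_def)
  define c where "c = min (1/2) (1 / (4 * C1 * C2))"
  have c: "0 < c" "c \<le> 1" "4 * C2 * c \<le> 1 / C1" using C by (auto simp: c_def min_def field_simps)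
  have "integral {a * dD D x..\<rho>1}
      (\<lambda>r. \<bar>\<dd> (x + r *\<^sub>R \<theta>) powr s - posp (\<dd> x + g x \<bullet> (r *\<^sub>R \<theta>)) powr s\<bar> / r powr (1 + 2 * s))
    \<le> estimate_constant s0 a c C1 C2 * (\<omega> (the_inv_into {0..} (\<lambda>t. t * \<omega> t) (dD D x)) / dD D x powr s)
        * Gs s (\<omega> (the_inv_into {0..} (\<lambda>t. t * \<omega> t) (dD D x)))"
    if s: "s \<in> {s0..<1}" and x: "x \<in> D" "dD D x < \<rho>1 / 2" "norm \<theta> = 1" for s x \<theta>
  proof -
    obtain T where T: "T = the_inv_into {0..} (\<lambda>t. t * \<omega> t) (dD D x)" "0 \<le> T" "T \<le> \<tau>" "T * \<omega> T = dD D x"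
      using inverse_of_times_modulus[OF cont mono \<omega>0 _ _ less_imp_le[OF \<tau>(1)], of "dD D x"] x \<rho>1
      by (auto simp: dD_def infdist_nonneg \<rho>1_def)
    have "\<omega> T \<le> 1/4" using \<omega>\<tau> T strict_mono_on_leD[OF mono, of T \<tau>] by auto
    then show ?thesis
      using regularized_distance_ray_estimate[OF assms(7) D mono \<omega>0 x(1,3) _ _ _ assms(3,4) io c T(2,4)]
        \<rho>1 t0(2) s assms(1) by (simp add: T(1))
  qed
  then show ?thesis using \<rho>1 estimate_constant_pos[OF assms(1,3) c(1) C] by blast
qed

end
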